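(* Let $R$ be a reduced elliptic root system of rank $l$ in $\mathcal V$ and let $\Pi\cup\{a\}$ be a fundamental-set of $R$; let $\pi_a:\mathcal V\to\mathcal V/\mathbb Ra$ be the canonical map. (1) For every $\alpha\in R$, $(\alpha+(\mathbb Z\setminus\{0\})a)\cap R\neq\emptyset$. (2) Let $S$ be a non-empty proper connected subset of $\Pi$, put $\mathcal V^S=\mathbb RS\oplus\mathbb Ra$ and $R^S=R\cap\mathcal V^S$. Then $(R^S,\mathcal V^S)$ is a reduced affine root system, $\pi_a(R^S)$ is an irreducible finite root system with base $\pi_a(S)$, and $\mathbb ZR^S=\mathbb ZS\oplus\mathbb Zk_Sa$ for some $k_S\in\mathbb N$.
   Context: Let $\mathcal V$ be a real vector space of dimension $l+2$ with a positive semi-definite symmetric bilinear form $(\,,\,)$ whose radical $\mathcal V^0=\{v:(v,v)=0\}$ has dimension $2$. For $(v,v)\ne0$ set $v^\vee=2v/(v,v)$, $s_v(z)=z-(v^\vee,z)v$. A set $S\subset\mathcal V\setminus\mathcal V^0$ is connected if there is no non-empty proper $S'\subset S$ with $(S',S\setminus S')=\{0\}$. An extended affine root system in a real space $\mathcal V$ with positive semidefinite form, rank $l$ and nullity $n=\dim\mathcal V^0$ ($\dim\mathcal V=l+n$), is a subset $R$ with: $R\subset\mathcal V\setminus\mathcal V^0$, $\mathbb RR=\mathcal V$; $\mathbb ZR$ free of rank $l+n$; $(\alpha^\vee,\beta)\in\mathbb Z$ for $\alpha,\beta\in R$; $s_\alpha(R)=R$ for $\alpha\in R$; $R$ connected.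 Nullity $0$: irreducible finite root system; nullity $1$: affine root system; nullity $2$: elliptic root system. $R$ is reduced if $R\cap 2R=\emptyset$. For nullity $0$ or $1$, a base of $R$ is a set $\Pi\subset R$ of $l+n$ linearly independent elements with $R=(R\cap\mathbb Z_{\ge0}\Pi)\cup(R\cap\mathbb Z_{\le0}\Pi)$. A fundamental-set of an elliptic root system $R$ is a subset $\Pi\cup\{a\}\subset\mathbb ZR$ with: $a\in\mathbb ZR\cap\mathcal V^0$ and there is $b$ with $\mathbb ZR\cap\mathcal V^0=\mathbb Za\oplus\mathbb Zb$; $\Pi\subset R$, $|\Pi|=l+1$, and $\pi_a(\Pi)$ is a base of the affine root system $\pi_a(R)\subset\mathcal V/\mathbb Ra$. *)

theory Defs
  imports "HOL-Analysis.Analysis"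
begin

definition psd_form_on :: "'v::real_vector set \<Rightarrow> ('v \<Rightarrow> 'v \<Rightarrow> real) \<Rightarrow> bool" where
  "psd_form_on W B \<longleftrightarrow> subspace W \<and>
     (\<forall>x\<in>W. \<forall>y\<in>W. B x y = B y x) \<and>
     (\<forall>x\<in>W. \<forall>y\<in>W. \<forall>z\<in>W. B (x + y) z = B x z + B y z) \<and>
     (\<forall>c. \<forall>x\<in>W. \<forall>y\<in>W. B (c *\<^sub>R x) y = c * B x y) \<and>
     (\<forall>x\<in>W. 0 \<le> B x x)"

definition rad :: "('v::real_vector \<Rightarrow> 'v \<Rightarrow> real) \<Rightarrow> 'v set \<Rightarrow> 'v set" where
  "rad B W = {v \<in> W. B v v = 0}"

definition copair :: "('v::real_vector \<Rightarrow> 'v \<Rightarrow> real) \<Rightarrow> 'v \<Rightarrow> 'v \<Rightarrow> real" where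
  "copair B \<alpha> \<beta> = 2 * B \<alpha> \<beta> / B \<alpha> \<alpha>"

definition refl :: "('v::real_vector \<Rightarrow> 'v \<Rightarrow> real) \<Rightarrow> 'v \<Rightarrow> 'v \<Rightarrow> 'v" where
  "refl B \<alpha> z = z - copair B \<alpha> z *\<^sub>R \<alpha>"

definition connected_set :: "('v::real_vector \<Rightarrow> 'v \<Rightarrow> real) \<Rightarrow> 'v set \<Rightarrow> bool" where
  "connected_set B S \<longleftrightarrow>
     \<not> (\<exists>S'. S' \<noteq> {} \<and> S' \<subset> S \<and> (\<forall>x\<in>S'. \<forall>y\<in>S - S'. B x y = 0))"

definition int_span :: "'v::real_vector set \<Rightarrow> 'v set" where
  "int_span X = {\<Sum>x\<in>F. of_int (c x) *\<^sub>R x | F c. finite F \<and> F \<subseteq> X}"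

definition int_independent :: "'v::real_vector set \<Rightarrow> bool" where
  "int_independent X \<longleftrightarrow> (\<forall>F c. finite F \<and> F \<subseteq> X \<and> (\<Sum>x\<in>F. of_int (c x) *\<^sub>R x) = 0
       \<longrightarrow> (\<forall>x\<in>F. c x = (0::int)))"

definition free_of_rank :: "'v::real_vector set \<Rightarrow> nat \<Rightarrow> bool" where
  "free_of_rank L k \<longleftrightarrow> (\<exists>Bs. finite Bs \<and> card Bs = k \<and> Bs \<subseteq> L \<and>
       int_span Bs = L \<and> int_independent Bs)"

text \<open>Extended affine root system \<open>R\<close> in the space \<open>W\<close> (with form \<open>B\<close>) of nullity \<open>n\<close>;
  its rank is \<open>dim W - n\<close>.  Nullity 0: irreducible finite root system; 1: affine;
  2: elliptic.\<close>
definition ears :: "('v::real_vector \<Rightarrow> 'v \<Rightarrow> real) \<Rightarrow> 'v set \<Rightarrow> 'v set \<Rightarrow> nat \<Rightarrow> bool" where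
  "ears B W R n \<longleftrightarrow> psd_form_on W B \<and> dim (rad B W) = n \<and>
     R \<subseteq> W - rad B W \<and> span R = W \<and>
     free_of_rank (int_span R) (dim W) \<and>
     (\<forall>\<alpha>\<in>R. \<forall>\<beta>\<in>R. copair B \<alpha> \<beta> \<in> \<int>) \<and>
     (\<forall>\<alpha>\<in>R. refl B \<alpha> ` R = R) \<and>
     connected_set B R"

definition reduced :: "'v::real_vector set \<Rightarrow> bool" where
  "reduced R \<longleftrightarrow> (\<forall>\<alpha>\<in>R. 2 *\<^sub>R \<alpha> \<notin> R)"

definition nonneg_int_comb :: "'v::real_vector set \<Rightarrow> 'v set" where
  "nonneg_int_comb P = {\<Sum>x\<in>P. of_int (c x) *\<^sub>R x | c. \<forall>x\<in>P. 0 \<le> c x}"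

definition nonpos_int_comb :: "'v::real_vector set \<Rightarrow> 'v set" where
  "nonpos_int_comb P = {\<Sum>x\<in>P. of_int (c x) *\<^sub>R x | c. \<forall>x\<in>P. c x \<le> 0}"

definition is_base :: "'v::real_vector set \<Rightarrow> 'v set \<Rightarrow> 'v set \<Rightarrow> bool" where
  "is_base W R P \<longleftrightarrow> P \<subseteq> R \<and> finite P \<and> card P = dim W \<and> independent P \<and>
     R = (R \<inter> nonneg_int_comb P) \<union> (R \<inter> nonpos_int_comb P)"

text \<open>A realization of the canonical map \<open>\<pi>\<^sub>a : V \<rightarrow> V/\<real>a\<close>: a linear map whose kernel
  is exactly \<open>\<real>a\<close>; the quotient \<open>V/\<real>a\<close> is identified with its image.\<close>
definition quotient_map :: "'v::real_vector \<Rightarrow> ('v \<Rightarrow> 'w::real_vector) \<Rightarrow> bool" where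
  "quotient_map a p \<longleftrightarrow> linear p \<and> (\<forall>x. p x = 0 \<longleftrightarrow> x \<in> span {a})"

definition qform :: "('v \<Rightarrow> 'v \<Rightarrow> real) \<Rightarrow> ('v \<Rightarrow> 'w) \<Rightarrow> 'w \<Rightarrow> 'w \<Rightarrow> real" where
  "qform B p u w = B (SOME x. p x = u) (SOME y. p y = w)"

definition fundamental_set ::
  "('v::real_vector \<Rightarrow> 'v \<Rightarrow> real) \<Rightarrow> 'v set \<Rightarrow> 'v set \<Rightarrow> 'v \<Rightarrow> ('v \<Rightarrow> 'w::real_vector) \<Rightarrow> bool" where
  "fundamental_set B R P a p \<longleftrightarrow>
     a \<in> int_span R \<inter> rad B UNIV \<and>
     (\<exists>b. int_span R \<inter> rad B UNIV = {of_int i *\<^sub>R a + of_int j *\<^sub>R b | i j. True} \<and>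
          (\<forall>i j. of_int i *\<^sub>R a + of_int j *\<^sub>R b = 0 \<longrightarrow> i = (0::int) \<and> j = (0::int))) \<and>
     P \<subseteq> R \<and> finite P \<and> card P = (dim (UNIV::'v set) - 2) + 1 \<and>
     ears (qform B p) (range p) (p ` R) 1 \<and>
     is_base (range p) (p ` R) (p ` P)"

end

theory Submission
  imports Defs
begin

(* For a root gamma let shifts(gamma) be the set of null vectors x with
   gamma + x a root.  Composing two reflections shows that shifts(gamma) is stable
   under x -> w +- 2x, and that "gamma + m v is a root for some m <> 0" propagates
   along non-orthogonal pairs of roots, hence (by connectedness) holds for all roots
   or for none.  If it held for no root, where v is any vector of the null lattice
   Z a + Z b, then every shifts(gamma) would lie in one line, the same line for all
   roots; the roots would then be finite modulo that line (their pairings with the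
   fundamental set take finitely many values), and an averaging argument with the
   finitely many residues shows that the 2-dimensional radical is that line.

   Writing roots in the basis P + {a}, a root of span(S + {a}) has all its
   P-coordinates outside S equal to zero; using part (1) for the generator b one sees
   that the radical meets span(S + {a}) only in the line R a. *)

section \<open>Integer spans\<close>

lemma int_span_intro:
  "finite F \<Longrightarrow> F \<subseteq> X \<Longrightarrow> (\<Sum>x\<in>F. of_int (c x) *\<^sub>R x) \<in> int_span X"
  unfolding int_span_def by blast

lemma int_span_0: "0 \<in> int_span X"
  unfolding int_span_def by (auto intro!: exI[of _ "{}"])

lemma int_span_sub_span: "int_span X \<subseteq> span X"
proof
  fix v assume "v \<in> int_span X"
  then obtain F c where v: "v = (\<Sum>x\<in>F. of_int (c x) *\<^sub>R x)" "finite F" "F \<subseteq> X"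
    unfolding int_span_def by blast
  show "v \<in> span X" unfolding v(1)
    by (rule span_sum) (use v in \<open>auto intro: span_mul span_base\<close>)
qed

lemma int_span_base: "x \<in> X \<Longrightarrow> x \<in> int_span X"
  using int_span_intro[of "{x}" X "\<lambda>_. 1"] by simp

lemma int_span_add:
  assumes "u \<in> int_span X" "v \<in> int_span X" shows "u + v \<in> int_span X"
proof -
  obtain F c where u: "u = (\<Sum>x\<in>F. of_int (c x) *\<^sub>R x)" "finite F" "F \<subseteq> X"
    using assms(1) unfolding int_span_def by blast
  obtain G d where v: "v = (\<Sum>x\<in>G. of_int (d x) *\<^sub>R x)" "finite G" "G \<subseteq> X"
    using assms(2) unfolding int_span_def by blast
  define e where "e x = (if x \<in> F then c x else 0) + (if x \<in> G then d x else 0)" for x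
  have fu: "u = (\<Sum>x\<in>F\<union>G. of_int (if x \<in> F then c x else 0) *\<^sub>R x)"
    unfolding u(1) using u(2) v(2) by (intro sum.mono_neutral_cong_left) auto
  have fv: "v = (\<Sum>x\<in>F\<union>G. of_int (if x \<in> G then d x else 0) *\<^sub>R x)"
    unfolding v(1) using u(2) v(2) by (intro sum.mono_neutral_cong_left) auto
  have "u + v = (\<Sum>x\<in>F\<union>G. of_int (e x) *\<^sub>R x)"
    unfolding fu fv sum.distrib[symmetric] e_def by (simp add: scaleR_add_left)
  then show ?thesis using int_span_intro[of "F \<union> G" X e] u v by simp
qed

lemma int_span_scale:
  assumes "u \<in> int_span X" shows "of_int k *\<^sub>R u \<in> int_span X"
proof -
  obtain F c where u: "u = (\<Sum>x\<in>F. of_int (c x) *\<^sub>R x)" "finite F" "F \<subseteq> X"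
    using assms(1) unfolding int_span_def by blast
  have "of_int k *\<^sub>R u = (\<Sum>x\<in>F. of_int (k * c x) *\<^sub>R x)"
    unfolding u(1) by (simp add: scaleR_sum_right)
  then show ?thesis using int_span_intro[of F X "\<lambda>x. k * c x"] u by simp
qed

lemma int_span_diff: "u \<in> int_span X \<Longrightarrow> v \<in> int_span X \<Longrightarrow> u - v \<in> int_span X"
  using int_span_add[of u X "-v"] int_span_scale[of v X "-1"] by simp

lemma int_span_sum:
  assumes "finite F" "\<And>x. x \<in> F \<Longrightarrow> f x \<in> int_span X"
  shows "(\<Sum>x\<in>F. f x) \<in> int_span X"
  using assms by (induction F rule: finite_induct) (auto intro: int_span_0 int_span_add)

lemma int_span_mono: "X \<subseteq> Y \<Longrightarrow> int_span X \<subseteq> int_span Y"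
  unfolding int_span_def by blast

lemma int_span_subset:
  assumes "X \<subseteq> int_span Y" shows "int_span X \<subseteq> int_span Y"
proof
  fix v assume "v \<in> int_span X"
  then obtain F c where v: "v = (\<Sum>x\<in>F. of_int (c x) *\<^sub>R x)" "finite F" "F \<subseteq> X"
    unfolding int_span_def by blast
  show "v \<in> int_span Y" unfolding v(1)
    by (rule int_span_sum) (use v assms in \<open>auto intro: int_span_scale\<close>)
qed

lemma int_span_insert_decomp:
  assumes "z \<in> int_span (insert x S)"
  shows "\<exists>s t. s \<in> int_span S \<and> z = s + of_int t *\<^sub>R x"
proof -
  obtain F c where z: "z = (\<Sum>y\<in>F. of_int (c y) *\<^sub>R y)" "finite F" "F \<subseteq> insert x S"
    using assms unfolding int_span_def by blast
  have s: "(\<Sum>y\<in>F - {x}. of_int (c y) *\<^sub>R y) \<in> int_span S"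
    using z by (intro int_span_intro) auto
  show ?thesis
  proof (cases "x \<in> F")
    case True
    then have "z = (\<Sum>y\<in>F - {x}. of_int (c y) *\<^sub>R y) + of_int (c x) *\<^sub>R x"
      unfolding z(1) using z(2) by (simp add: sum.remove add.commute)
    then show ?thesis using s by blast
  next
    case False
    then have "z = (\<Sum>y\<in>F - {x}. of_int (c y) *\<^sub>R y) + of_int 0 *\<^sub>R x" unfolding z(1) by simp
    then show ?thesis using s by blast
  qed
qed

lemma int_span_insert_mem:
  "s \<in> int_span S \<Longrightarrow> s + of_int t *\<^sub>R x \<in> int_span (insert x S)"
  by (meson int_span_add int_span_base int_span_mono int_span_scale insertI1 subset_insertI subsetD)

lemma independent_imp_int_independent: "independent X \<Longrightarrow> int_independent X"
  unfolding int_independent_def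
proof (intro allI impI ballI)
  fix F c x assume "independent X"
    and h: "finite F \<and> F \<subseteq> X \<and> (\<Sum>x\<in>F. real_of_int (c x) *\<^sub>R x) = 0" and "x \<in> F"
  then have "real_of_int (c x) = 0"
    using independentD[of X F "\<lambda>v. real_of_int (c v)" x] by blast
  then show "c x = 0" by simp
qed

lemma int_span_coords:
  assumes "finite Bs" "v \<in> int_span Bs"
  shows "\<exists>c. v = (\<Sum>e\<in>Bs. of_int (c e) *\<^sub>R e)"
proof -
  from assms(2) obtain F c where v: "v = (\<Sum>x\<in>F. of_int (c x) *\<^sub>R x)" "finite F" "F \<subseteq> Bs"
    unfolding int_span_def by blast
  have "v = (\<Sum>e\<in>Bs. of_int (if e \<in> F then c e else 0) *\<^sub>R e)"
    unfolding v(1) using v(2,3) assms(1) by (intro sum.mono_neutral_cong_left) auto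
  then show ?thesis by (rule exI[of _ "\<lambda>e. if e \<in> F then c e else 0"])
qed

text \<open>Two vectors of a lattice with an \<open>\<real>\<close>-independent \<open>\<int>\<close>-basis which are linearly
  dependent over \<open>\<real>\<close> are already dependent over \<open>\<int>\<close>: compare coordinates.\<close>

lemma lattice_real_dependence_int:
  assumes Bs: "finite Bs" "independent Bs"
    and xy: "x \<in> int_span Bs" "y \<in> int_span Bs"
    and dep: "r *\<^sub>R x + s *\<^sub>R y = 0" "r \<noteq> 0 \<or> s \<noteq> 0"
  shows "\<exists>i j::int. (i \<noteq> 0 \<or> j \<noteq> 0) \<and> of_int i *\<^sub>R x + of_int j *\<^sub>R y = 0"
proof (cases "x = 0")
  case True
  then show ?thesis by (intro exI[of _ 1] exI[of _ 0]) simp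
next
  case x0: False
  obtain \<alpha> where \<alpha>: "x = (\<Sum>e\<in>Bs. of_int (\<alpha> e) *\<^sub>R e)" using int_span_coords Bs(1) xy(1) by blast
  obtain \<beta> where \<beta>: "y = (\<Sum>e\<in>Bs. of_int (\<beta> e) *\<^sub>R e)" using int_span_coords Bs(1) xy(2) by blast
  have lin: "u *\<^sub>R x + w *\<^sub>R y = (\<Sum>e\<in>Bs. (u * of_int (\<alpha> e) + w * of_int (\<beta> e)) *\<^sub>R e)" for u w
    unfolding \<alpha> \<beta> by (simp add: scaleR_sum_right sum.distrib[symmetric] scaleR_add_left)
  have coeff_zero: "u * of_int (\<alpha> e) + w * of_int (\<beta> e) = 0"
    if "u *\<^sub>R x + w *\<^sub>R y = 0" "e \<in> Bs" for u w e
    using independentD[OF Bs(2) Bs(1) order_refl, of "\<lambda>e. u * of_int (\<alpha> e) + w * of_int (\<beta> e)" e]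
      that unfolding lin by simp
  obtain e0 where e0: "e0 \<in> Bs" "\<alpha> e0 \<noteq> 0"
  proof (rule ccontr)
    assume "\<not> thesis"
    then have "\<forall>e\<in>Bs. \<alpha> e = 0" using that by blast
    then show False using x0 unfolding \<alpha> by simp
  qed
  have "s \<noteq> 0" using coeff_zero[OF dep(1) e0(1)] e0(2) dep(2) by auto
  then have \<beta>_prop: "of_int (\<beta> e) = - (r / s) * of_int (\<alpha> e)" if "e \<in> Bs" for e
    using coeff_zero[OF dep(1) that] by (simp add: field_simps)
  have "of_int (\<beta> e0) *\<^sub>R x + of_int (- \<alpha> e0) *\<^sub>R y = 0"
    unfolding lin by (rule sum.neutral) (use \<beta>_prop e0 in \<open>auto simp: algebra_simps\<close>)
  then show ?thesis using e0(2) by (intro exI[of _ "\<beta> e0"] exI[of _ "- \<alpha> e0"]) simp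
qed

section \<open>Positive semidefinite forms and reflections\<close>

text \<open>The orthogonal projection with kernel the line \<open>\<real>n\<close>; it is used to pick canonical
  representatives of vectors modulo \<open>\<real>n\<close>.\<close>

definition line_proj :: "'a::real_inner \<Rightarrow> 'a \<Rightarrow> 'a" where
  "line_proj n z = z - ((z \<bullet> n) / (n \<bullet> n)) *\<^sub>R n"

lemma linear_line_proj: "linear (line_proj n)"
  unfolding line_proj_def
  by (rule linearI) (auto simp: inner_add_left algebra_simps add_divide_distrib scaleR_add_left)

lemma line_proj_eq_0: "z \<in> span {n} \<Longrightarrow> line_proj n z = 0"
  by (cases "n = 0") (auto simp: line_proj_def span_singleton)

lemma line_proj_diff_in_line: "z - line_proj n z \<in> span {n}"
  unfolding line_proj_def by (simp add: span_base span_mul)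

locale psd_space =
  fixes B :: "'v::euclidean_space \<Rightarrow> 'v \<Rightarrow> real"
  assumes psdB: "psd_form_on UNIV B"
begin

lemma B_sym: "B x y = B y x" using psdB unfolding psd_form_on_def by auto
lemma B_add_left: "B (x + y) z = B x z + B y z" using psdB unfolding psd_form_on_def by auto
lemma B_add_right: "B z (x + y) = B z x + B z y" using B_add_left B_sym by metis
lemma B_scale_left: "B (c *\<^sub>R x) y = c * B x y" using psdB unfolding psd_form_on_def by auto
lemma B_scale_right: "B y (c *\<^sub>R x) = c * B y x" using B_scale_left B_sym by metis
lemma B_nonneg: "0 \<le> B x x" using psdB unfolding psd_form_on_def by auto
lemma B_zero_left[simp]: "B 0 y = 0" using B_scale_left[of 0 0 y] by simp
lemma B_zero_right[simp]: "B y 0 = 0" using B_zero_left B_sym by metis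
lemma B_neg_left: "B (- x) y = - B x y" using B_scale_left[of "-1" x y] by simp
lemma B_neg_right: "B y (- x) = - B y x" using B_scale_right[of y "-1" x] by simp
lemma B_diff_left: "B (x - y) z = B x z - B y z" using B_add_left[of x "-y" z] B_neg_left by simp
lemma B_diff_right: "B z (x - y) = B z x - B z y" using B_add_right[of z x "-y"] B_neg_right by simp
lemmas bilinear_simps = B_add_left B_add_right B_scale_left B_scale_right B_neg_left B_neg_right B_diff_left B_diff_right

lemma B_sum_left: "B (\<Sum>x\<in>F. f x) y = (\<Sum>x\<in>F. B (f x) y)"
  by (induction F rule: infinite_finite_induct) (auto simp: B_add_left)
lemma B_sum_right: "B y (\<Sum>x\<in>F. f x) = (\<Sum>x\<in>F. B y (f x))"
  by (induction F rule: infinite_finite_induct) (auto simp: B_add_right)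

lemma cauchy_schwarz: "(B x y)^2 \<le> B x x * B y y"
proof (cases "B y y = 0")
  case True
  have "B x y = 0"
  proof (rule ccontr)
    assume h: "B x y \<noteq> 0"
    define t where "t = - (B x x + 1) / (2 * B x y)"
    have "0 \<le> B (x + t *\<^sub>R y) (x + t *\<^sub>R y)" by (rule B_nonneg)
    also have "\<dots> = B x x + 2 * t * B x y + t * t * B y y"
      by (simp add: bilinear_simps B_sym[of y x] algebra_simps)
    also have "\<dots> = -1" using True h unfolding t_def by (simp add: field_simps)
    finally show False by simp
  qed
  then show ?thesis using True by simp
next
  case False
  then have pos: "B y y > 0" using B_nonneg[of y] by simp
  define t where "t = - B x y / B y y"
  have "0 \<le> B (x + t *\<^sub>R y) (x + t *\<^sub>R y)" by (rule B_nonneg)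
  also have "\<dots> = B x x + 2 * t * B x y + t * t * B y y"
    by (simp add: bilinear_simps B_sym[of y x] algebra_simps)
  also have "\<dots> = B x x - (B x y)^2 / B y y" using pos unfolding t_def
    by (simp add: field_simps power2_eq_square)
  finally show ?thesis using pos by (simp add: field_simps)
qed

lemma rad_orth: "n \<in> rad B UNIV \<Longrightarrow> B n z = 0" "n \<in> rad B UNIV \<Longrightarrow> B z n = 0"
proof -
  assume "n \<in> rad B UNIV"
  then have "(B n z)^2 \<le> 0" using cauchy_schwarz[of n z] unfolding rad_def by simp
  then show "B n z = 0" by simp
  then show "B z n = 0" using B_sym by simp
qed

lemma subspace_rad: "subspace (rad B UNIV)"
proof -
  have "n \<in> rad B UNIV \<longleftrightarrow> (\<forall>z. B n z = 0)" for n
  proof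
    assume "n \<in> rad B UNIV" then show "\<forall>z. B n z = 0" using rad_orth by blast
  next
    assume "\<forall>z. B n z = 0" then show "n \<in> rad B UNIV" by (simp add: rad_def)
  qed
  then show ?thesis unfolding subspace_def by (auto simp: bilinear_simps)
qed

lemma rad_mul: "n \<in> rad B UNIV \<Longrightarrow> c *\<^sub>R n \<in> rad B UNIV"
  using subspace_rad by (simp add: subspace_mul)

lemma span_rad: "X \<subseteq> rad B UNIV \<Longrightarrow> span X \<subseteq> rad B UNIV"
  using subspace_rad by (simp add: span_minimal)

lemma B_mod_rad: "x' - x \<in> rad B UNIV \<Longrightarrow> y' - y \<in> rad B UNIV \<Longrightarrow> B x' y' = B x y"
  using rad_orth[of "x' - x"] rad_orth[of "y' - y"] by (simp add: B_diff_left B_diff_right)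

lemma B_add_rad: "x \<in> rad B UNIV \<Longrightarrow> B (\<gamma> + x) z = B \<gamma> z" "x \<in> rad B UNIV \<Longrightarrow> B z (\<gamma> + x) = B z \<gamma>"
  using B_mod_rad[of "\<gamma> + x" \<gamma> z z] B_mod_rad[of z z "\<gamma> + x" \<gamma>] subspace_rad
  by (auto simp: subspace_0)

definition reflect :: "'v \<Rightarrow> 'v \<Rightarrow> 'v" where
  "reflect \<alpha> z = z - (2 * B \<alpha> z / B \<alpha> \<alpha>) *\<^sub>R \<alpha>"

lemma refl_eq: "refl B \<alpha> = reflect \<alpha>"
  unfolding refl_def copair_def reflect_def by auto

lemma linear_reflect: "linear (reflect \<alpha>)"
  unfolding reflect_def
  by (rule linearI) (auto simp: bilinear_simps algebra_simps add_divide_distrib scaleR_add_left)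

lemma reflect_isometry: "B \<alpha> \<alpha> \<noteq> 0 \<Longrightarrow> B (reflect \<alpha> x) (reflect \<alpha> y) = B x y"
  unfolding reflect_def
  by (simp add: bilinear_simps B_sym[of x \<alpha>] B_sym[of y \<alpha>] field_simps power2_eq_square)

lemma reflect_involution: "B \<alpha> \<alpha> \<noteq> 0 \<Longrightarrow> reflect \<alpha> (reflect \<alpha> x) = x"
  unfolding reflect_def by (simp add: bilinear_simps field_simps)

lemma B_line_proj: "n \<in> rad B UNIV \<Longrightarrow> B (line_proj n z) w = B z w"
  unfolding line_proj_def by (simp add: B_diff_left B_scale_left rad_orth)

lemma reflect_rad: "n \<in> rad B UNIV \<Longrightarrow> reflect \<alpha> n = n"
  unfolding reflect_def using rad_orth by simp

text \<open>The map \<open>w \<mapsto> \<Sum>\<^sub>f B f w \<cdot> f\<close> attached to a finite set \<open>F\<close>; it vanishes on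
  vectors which it sends into the radical, because \<open>B (gram_map F w) w = \<Sum>\<^sub>f (B f w)\<^sup>2\<close>.\<close>

definition gram_map :: "'v set \<Rightarrow> 'v \<Rightarrow> 'v" where
  "gram_map F w = (\<Sum>f\<in>F. B f w *\<^sub>R f)"

lemma linear_gram_map: "linear (gram_map F)"
  unfolding gram_map_def
  by (rule linearI) (simp_all add: B_add_right B_scale_right scaleR_add_left sum.distrib scaleR_sum_right)

lemma B_gram_map: "B w (gram_map F w) = (\<Sum>f\<in>F. (B f w)^2)"
  unfolding gram_map_def by (simp add: B_sum_right B_scale_right B_sym[of w] power2_eq_square)

lemma gram_map_rad:
  assumes "finite F" "gram_map F w \<in> rad B UNIV" shows "gram_map F w = 0"
proof -
  have "(\<Sum>f\<in>F. (B f w)^2) = 0" using B_gram_map[of w F] rad_orth(2)[OF assms(2)] by simp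
  then have "\<forall>f\<in>F. B f w = 0" using assms(1) by (subst (asm) sum_nonneg_eq_0_iff) auto
  then show ?thesis unfolding gram_map_def by simp
qed

end

section \<open>Root systems closed under reflections\<close>

locale reflection_system = psd_space B for B :: "'v::euclidean_space \<Rightarrow> 'v \<Rightarrow> real" +
  fixes R :: "'v set"
  assumes roots_nonnull: "\<gamma> \<in> R \<Longrightarrow> \<gamma> \<notin> rad B UNIV"
    and cartan_int: "\<alpha> \<in> R \<Longrightarrow> \<beta> \<in> R \<Longrightarrow> 2 * B \<alpha> \<beta> / B \<alpha> \<alpha> \<in> \<int>"
    and reflections_stable: "\<alpha> \<in> R \<Longrightarrow> refl B \<alpha> ` R = R"
    and roots_connected: "connected_set B R"

lemma ears_reflection_system: "ears B UNIV R n \<Longrightarrow> reflection_system B R"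
  unfolding ears_def copair_def reflection_system_def reflection_system_axioms_def psd_space_def
  by auto

context reflection_system
begin

lemma root_norm_pos: "\<gamma> \<in> R \<Longrightarrow> B \<gamma> \<gamma> > 0"
  using roots_nonnull[of \<gamma>] B_nonneg[of \<gamma>] unfolding rad_def by auto

lemma root_norm_nz: "\<gamma> \<in> R \<Longrightarrow> B \<gamma> \<gamma> \<noteq> 0"
  using root_norm_pos by force

lemma reflect_root: "\<alpha> \<in> R \<Longrightarrow> \<beta> \<in> R \<Longrightarrow> reflect \<alpha> \<beta> \<in> R"
  using reflections_stable by (auto simp: refl_eq)

lemma cartan_int_nz:
  assumes "\<gamma> \<in> R" "\<delta> \<in> R" "B \<gamma> \<delta> \<noteq> 0"
  obtains n :: int where "n \<noteq> 0" "2 * B \<gamma> \<delta> / B \<gamma> \<gamma> = of_int n"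
proof -
  obtain n :: int where n: "2 * B \<gamma> \<delta> / B \<gamma> \<gamma> = of_int n"
    using cartan_int[OF assms(1,2)] Ints_cases by metis
  moreover have "n \<noteq> 0" using n assms(3) root_norm_nz[OF assms(1)] by auto
  ultimately show ?thesis using that by blast
qed

lemma connected_closure:
  assumes "S' \<subseteq> R" "S' \<noteq> {}" "\<And>\<gamma> \<delta>. \<gamma> \<in> S' \<Longrightarrow> \<delta> \<in> R \<Longrightarrow> B \<gamma> \<delta> \<noteq> 0 \<Longrightarrow> \<delta> \<in> S'"
  shows "S' = R"
proof (rule ccontr)
  assume "S' \<noteq> R"
  then have "S' \<subset> R" using assms(1) by auto
  moreover have "\<forall>x\<in>S'. \<forall>y\<in>R - S'. B x y = 0" using assms(3) by blast
  ultimately show False using roots_connected assms(2) unfolding connected_set_def by blast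
qed

text \<open>Cauchy-Schwarz bounds the Cartan integers: \<open>|\<langle>\<beta>\<^sup>\<or>,\<gamma>\<rangle>| \<le> 4\<close>.\<close>

lemma cartan_abs_le_4:
  assumes b: "\<beta> \<in> R" and g: "\<gamma> \<in> R" shows "\<bar>2 * B \<beta> \<gamma> / B \<beta> \<beta>\<bar> \<le> 4"
proof (cases "B \<beta> \<gamma> = 0")
  case True then show ?thesis by simp
next
  case False
  obtain n1 :: int where n1: "2 * B \<beta> \<gamma> / B \<beta> \<beta> = of_int n1"
    using cartan_int[OF b g] Ints_cases by metis
  obtain n2 :: int where n2: "n2 \<noteq> 0" "2 * B \<gamma> \<beta> / B \<gamma> \<gamma> = of_int n2"
    using cartan_int_nz[OF g b] False B_sym by metis
  have pb: "B \<beta> \<beta> > 0" and pg: "B \<gamma> \<gamma> > 0" using root_norm_pos b g by auto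
  have "of_int (n1 * n2) = (2 * B \<beta> \<gamma> / B \<beta> \<beta>) * (2 * B \<gamma> \<beta> / B \<gamma> \<gamma>)"
    using n1 n2 by simp
  also have "\<dots> = 4 * (B \<beta> \<gamma>)^2 / (B \<beta> \<beta> * B \<gamma> \<gamma>)"
    using B_sym[of \<gamma> \<beta>] by (simp add: field_simps power2_eq_square)
  finally have prod: "of_int (n1 * n2) = 4 * (B \<beta> \<gamma>)^2 / (B \<beta> \<beta> * B \<gamma> \<gamma>)" .
  have "4 * (B \<beta> \<gamma>)^2 / (B \<beta> \<beta> * B \<gamma> \<gamma>) \<le> 4"
    using cauchy_schwarz[of \<beta> \<gamma>] pb pg by (simp add: divide_le_eq)
  then have le4: "n1 * n2 \<le> 4" unfolding prod[symmetric] by linarith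
  have "1 \<le> \<bar>n2\<bar>" using n2(1) by linarith
  then have "\<bar>n1\<bar> \<le> \<bar>n1\<bar> * \<bar>n2\<bar>" by (simp add: mult_le_cancel_left1)
  also have "\<dots> = n1 * n2"
  proof -
    have "0 \<le> real_of_int (n1 * n2)" unfolding prod using pb pg by simp
    then show ?thesis by (simp add: abs_mult[symmetric] del: of_int_mult)
  qed
  finally show ?thesis using n1 le4 by simp
qed

definition cartan_profile :: "'v set \<Rightarrow> 'v \<Rightarrow> 'v \<Rightarrow> real" where
  "cartan_profile P \<gamma> = restrict (\<lambda>\<beta>. 2 * B \<beta> \<gamma> / B \<beta> \<beta>) P"

lemma finite_cartan_profiles:
  assumes P: "finite P" "P \<subseteq> R" shows "finite (cartan_profile P ` R)"
proof -
  define I where "I = {x::real. x \<in> \<int> \<and> \<bar>x\<bar> \<le> 4}"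
  have "I \<subseteq> of_int ` {-4..4}"
  proof
    fix x :: real assume "x \<in> I"
    then obtain k :: int where "x = of_int k" "\<bar>x\<bar> \<le> 4" unfolding I_def by (auto elim: Ints_cases)
    then show "x \<in> of_int ` {-4..4}" by (intro image_eqI[of _ _ k]) auto
  qed
  then have "finite I" by (rule finite_subset) simp
  moreover have "cartan_profile P ` R \<subseteq> PiE P (\<lambda>_. I)"
    unfolding cartan_profile_def I_def using cartan_int cartan_abs_le_4 P(2) by auto
  ultimately show ?thesis using finite_PiE[OF P(1)] by (meson finite_subset)
qed

definition shifts :: "'v \<Rightarrow> 'v set" where
  "shifts \<gamma> = {x. x \<in> rad B UNIV \<and> \<gamma> + x \<in> R}"

text \<open>If \<open>\<gamma>\<close> and \<open>\<gamma> + x\<close> are roots with \<open>x\<close> null, then \<open>s\<^bsub>\<gamma>+x\<^esub> s\<^sub>\<gamma>\<close> and \<open>s\<^sub>\<gamma> s\<^bsub>\<gamma>+x\<^esub>\<close>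
  translate every root \<open>\<delta>\<close> by \<open>\<pm>\<langle>\<gamma>\<^sup>\<or>,\<delta>\<rangle> x\<close>.\<close>

lemma double_reflection_shift:
  assumes g: "\<gamma> \<in> R" and x: "x \<in> rad B UNIV" "\<gamma> + x \<in> R" and d: "\<delta> \<in> R"
  shows "\<delta> + (2 * B \<gamma> \<delta> / B \<gamma> \<gamma>) *\<^sub>R x \<in> R" "\<delta> - (2 * B \<gamma> \<delta> / B \<gamma> \<gamma>) *\<^sub>R x \<in> R"
proof -
  have ne: "B \<gamma> \<gamma> \<noteq> 0" using root_norm_nz g .
  define c where "c = 2 * B \<gamma> \<delta> / B \<gamma> \<gamma>"
  have gg: "B (\<gamma> + x) (\<gamma> + x) = B \<gamma> \<gamma>" using B_add_rad x by simp
  have p1: "B \<gamma> (\<delta> - c *\<^sub>R \<gamma>) = - B \<gamma> \<delta>"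
    unfolding c_def using ne by (simp add: bilinear_simps field_simps)
  have "reflect (\<gamma> + x) (reflect \<gamma> \<delta>)
      = \<delta> - c *\<^sub>R \<gamma> - (2 * B \<gamma> (\<delta> - c *\<^sub>R \<gamma>) / B \<gamma> \<gamma>) *\<^sub>R (\<gamma> + x)"
    using gg B_add_rad(1)[OF x(1)] by (simp add: reflect_def c_def)
  also have "\<dots> = \<delta> + c *\<^sub>R x" unfolding p1 by (simp add: algebra_simps c_def mult.commute)
  finally have "reflect (\<gamma> + x) (reflect \<gamma> \<delta>) = \<delta> + c *\<^sub>R x" .
  then show "\<delta> + (2 * B \<gamma> \<delta> / B \<gamma> \<gamma>) *\<^sub>R x \<in> R"
    using reflect_root g x d unfolding c_def by metis
  have p2: "B \<gamma> (\<delta> - c *\<^sub>R (\<gamma> + x)) = - B \<gamma> \<delta>"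
    unfolding c_def using ne rad_orth x(1) by (simp add: bilinear_simps field_simps)
  have "reflect \<gamma> (reflect (\<gamma> + x) \<delta>) = reflect \<gamma> (\<delta> - c *\<^sub>R (\<gamma> + x))"
    using gg B_add_rad(1)[OF x(1)] by (simp add: reflect_def c_def)
  also have "\<dots> = (\<delta> - c *\<^sub>R (\<gamma> + x)) - (2 * B \<gamma> (\<delta> - c *\<^sub>R (\<gamma> + x)) / B \<gamma> \<gamma>) *\<^sub>R \<gamma>"
    by (simp only: reflect_def)
  also have "\<dots> = \<delta> - c *\<^sub>R x" by (simp only: p2) (simp add: algebra_simps c_def mult.commute)
  finally have "reflect \<gamma> (reflect (\<gamma> + x) \<delta>) = \<delta> - c *\<^sub>R x" .
  then show "\<delta> - (2 * B \<gamma> \<delta> / B \<gamma> \<gamma>) *\<^sub>R x \<in> R"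
    using reflect_root g x d unfolding c_def by metis
qed

lemma zero_shift: "\<gamma> \<in> R \<Longrightarrow> 0 \<in> shifts \<gamma>"
  unfolding shifts_def using subspace_rad by (simp add: subspace_0)

text \<open>Taking \<open>\<delta> = \<gamma> + w\<close> above: the shift set is stable under \<open>w \<mapsto> w \<pm> 2x\<close>.\<close>

lemma shifts_step:
  assumes g: "\<gamma> \<in> R" and x: "x \<in> shifts \<gamma>" and w: "w \<in> shifts \<gamma>"
  shows "w + 2 *\<^sub>R x \<in> shifts \<gamma>" "w - 2 *\<^sub>R x \<in> shifts \<gamma>"
proof -
  have xr: "x \<in> rad B UNIV" "\<gamma> + x \<in> R" and wr: "w \<in> rad B UNIV" "\<gamma> + w \<in> R"
    using x w unfolding shifts_def by auto
  have c: "2 * B \<gamma> (\<gamma> + w) / B \<gamma> \<gamma> = 2" using root_norm_nz[OF g] B_add_rad(2)[OF wr(1)] by simp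
  have "\<gamma> + w + 2 *\<^sub>R x \<in> R" "\<gamma> + w - 2 *\<^sub>R x \<in> R"
    using double_reflection_shift[OF g xr wr(2)] unfolding c by auto
  moreover have "w + 2 *\<^sub>R x \<in> rad B UNIV" "w - 2 *\<^sub>R x \<in> rad B UNIV"
    using xr wr subspace_rad by (auto intro: subspace_add subspace_diff subspace_mul)
  ultimately show "w + 2 *\<^sub>R x \<in> shifts \<gamma>" "w - 2 *\<^sub>R x \<in> shifts \<gamma>"
    unfolding shifts_def by (auto simp: add.assoc add_diff_eq)
qed

lemma shifts_even_multiples:
  assumes g: "\<gamma> \<in> R" and x: "x \<in> shifts \<gamma>" and w: "w \<in> shifts \<gamma>"
  shows "w + of_int (2 * k) *\<^sub>R x \<in> shifts \<gamma>"
proof (induction k rule: int_induct[where k=0])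
  case base then show ?case using w by simp
next
  case (step1 i)
  have "w + of_int (2 * i) *\<^sub>R x + 2 *\<^sub>R x \<in> shifts \<gamma>" using shifts_step(1)[OF g x step1(2)] .
  then show ?case by (simp add: algebra_simps)
next
  case (step2 i)
  have "w + of_int (2 * i) *\<^sub>R x - 2 *\<^sub>R x \<in> shifts \<gamma>" using shifts_step(2)[OF g x step2(2)] .
  then show ?case by (simp add: algebra_simps)
qed

lemma shifts_even_combination:
  assumes g: "\<gamma> \<in> R" and x: "x \<in> shifts \<gamma>" and y: "y \<in> shifts \<gamma>"
  shows "of_int (2 * i) *\<^sub>R x + of_int (2 * j) *\<^sub>R y \<in> shifts \<gamma>"
proof -
  have "0 + of_int (2 * i) *\<^sub>R x \<in> shifts \<gamma>"
    using shifts_even_multiples[OF g x zero_shift[OF g]] .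
  from shifts_even_multiples[OF g y this] show ?thesis by simp
qed

lemma even_multiple_shift:
  assumes g: "\<gamma> \<in> R" and v: "v \<in> rad B UNIV" and m: "\<gamma> + of_int m *\<^sub>R v \<in> R"
  shows "\<gamma> + of_int (2 * j * m) *\<^sub>R v \<in> R"
proof -
  have x: "of_int m *\<^sub>R v \<in> shifts \<gamma>" unfolding shifts_def using m v by (simp add: rad_mul)
  have "0 + of_int (2 * j) *\<^sub>R (of_int m *\<^sub>R v) \<in> shifts \<gamma>"
    using shifts_even_multiples[OF g x zero_shift[OF g]] .
  then show ?thesis unfolding shifts_def by (simp add: mult.assoc)
qed

lemma shifts_in_lattice: "\<gamma> \<in> R \<Longrightarrow> x \<in> shifts \<gamma> \<Longrightarrow> x \<in> int_span R \<inter> rad B UNIV"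
  using int_span_diff[of "\<gamma> + x" R \<gamma>] int_span_base[of _ R] unfolding shifts_def by auto

lemma shifts_line_propagates:
  assumes d: "\<delta> \<in> R" "shifts \<delta> \<subseteq> span {x1}" and g: "\<gamma> \<in> R" and ne: "B \<delta> \<gamma> \<noteq> 0"
  shows "shifts \<gamma> \<subseteq> span {x1}"
proof
  fix y assume y: "y \<in> shifts \<gamma>"
  have yr: "y \<in> rad B UNIV" "\<gamma> + y \<in> R" using y unfolding shifts_def by auto
  define c where "c = 2 * B \<gamma> \<delta> / B \<gamma> \<gamma>"
  have c0: "c \<noteq> 0" unfolding c_def using ne B_sym root_norm_nz[OF g] by auto
  have "c *\<^sub>R y \<in> shifts \<delta>"
    using double_reflection_shift(1)[OF g yr d(1)] yr(1) unfolding shifts_def c_def by (simp add: rad_mul)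
  then have "(1 / c) *\<^sub>R (c *\<^sub>R y) \<in> span {x1}" using d(2) by (blast intro: span_mul)
  then show "y \<in> span {x1}" using c0 by simp
qed

definition has_shift :: "'v \<Rightarrow> 'v \<Rightarrow> bool" where
  "has_shift v \<gamma> \<longleftrightarrow> (\<exists>m::int. m \<noteq> 0 \<and> \<gamma> + of_int m *\<^sub>R v \<in> R)"

lemma has_shift_propagates:
  assumes v: "v \<in> rad B UNIV" and q: "has_shift v \<gamma>" and g: "\<gamma> \<in> R" and d: "\<delta> \<in> R"
    and ne: "B \<gamma> \<delta> \<noteq> 0"
  shows "has_shift v \<delta>"
proof -
  obtain m :: int where m: "m \<noteq> 0" "\<gamma> + of_int m *\<^sub>R v \<in> R" using q unfolding has_shift_def by blast
  obtain n :: int where n: "n \<noteq> 0" "2 * B \<gamma> \<delta> / B \<gamma> \<gamma> = of_int n"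
    using cartan_int_nz[OF g d ne] by blast
  from double_reflection_shift(1)[OF g rad_mul[OF v] m(2) d]
  have "\<delta> + of_int (n * m) *\<^sub>R v \<in> R" unfolding n by simp
  then show ?thesis unfolding has_shift_def using m n by (intro exI[of _ "n*m"]) simp
qed

lemma has_shift_all_or_none:
  assumes v: "v \<in> rad B UNIV" and g: "\<gamma> \<in> R" "has_shift v \<gamma>" and d: "\<delta> \<in> R"
  shows "has_shift v \<delta>"
proof -
  have "{\<gamma>\<in>R. has_shift v \<gamma>} = R"
    by (rule connected_closure) (use g has_shift_propagates[OF v] in auto)
  then show ?thesis using d by blast
qed

text \<open>Let
  \<open>F\<close> be the finite set of residues and \<open>\<Phi> = gram_map F\<close>; the subspace \<open>\<Phi>(V) + \<real>n\<close> is
  stable under all reflections and contains every root \<open>\<gamma>\<close> (as \<open>\<Phi>\<gamma> - s\<^sub>\<gamma>\<Phi>\<gamma>\<close> is a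
  non-zero multiple of \<open>\<gamma>\<close>), hence is everything; but \<open>\<Phi>\<close> kills whatever it maps into
  the radical.

  First, reflections commute with \<open>\<Phi>\<close> modulo \<open>\<real>n\<close>, since \<open>s\<^sub>\<sigma>\<close> permutes the residues.\<close>

lemma reflect_gram_map:
  assumes s: "\<sigma> \<in> R" and n: "n \<in> rad B UNIV"
  shows "reflect \<sigma> (gram_map (line_proj n ` R) w) - gram_map (line_proj n ` R) (reflect \<sigma> w)
           \<in> span {n}"
proof -
  define F where "F = line_proj n ` R"
  define g where "g f = line_proj n (reflect \<sigma> f)" for f
  have span_n: "span {n} \<subseteq> rad B UNIV" using n by (simp add: span_rad)
  have g_proj: "g (line_proj n z) = line_proj n (reflect \<sigma> z)" for z
  proof -
    have "reflect \<sigma> z - reflect \<sigma> (line_proj n z) \<in> span {n}"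
      using linear_diff[OF linear_reflect, symmetric] line_proj_diff_in_line[of z n]
        reflect_rad span_n by (metis subsetD)
    then show ?thesis
      unfolding g_def using linear_diff[OF linear_line_proj] line_proj_eq_0 by (metis right_minus_eq)
  qed
  have gF: "g f \<in> F" if "f \<in> F" for f
    using that reflect_root[OF s] g_proj unfolding F_def by auto
  have ggF: "g (g f) = f" if f: "f \<in> F" for f
  proof -
    obtain \<gamma> where "\<gamma> \<in> R" "f = line_proj n \<gamma>" using f unfolding F_def by blast
    then show ?thesis using g_proj reflect_involution[OF root_norm_nz[OF s]] by simp
  qed
  have bij: "bij_betw g F F"
    by (rule bij_betwI[where g=g]) (auto simp: gF ggF)
  have Bg: "B (g f) (reflect \<sigma> w) = B f w" for f
    unfolding g_def B_line_proj[OF n] using reflect_isometry[OF root_norm_nz[OF s]] .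
  have "gram_map F (reflect \<sigma> w) = (\<Sum>f\<in>F. B (g f) (reflect \<sigma> w) *\<^sub>R g f)"
    unfolding gram_map_def using sum.reindex_bij_betw[OF bij, of "\<lambda>f. B f (reflect \<sigma> w) *\<^sub>R f"] by simp
  also have "\<dots> = (\<Sum>f\<in>F. B f w *\<^sub>R g f)" using Bg by simp
  finally have "reflect \<sigma> (gram_map F w) - gram_map F (reflect \<sigma> w)
      = (\<Sum>f\<in>F. B f w *\<^sub>R (reflect \<sigma> f - g f))"
    unfolding gram_map_def linear_sum[OF linear_reflect] linear_scale[OF linear_reflect]
    by (simp add: scaleR_diff_right sum_subtractf)
  also have "\<dots> \<in> span {n}"
    unfolding g_def using line_proj_diff_in_line by (intro span_sum span_mul) auto
  finally show ?thesis unfolding F_def .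
qed

text \<open>A subspace stable under \<open>s\<^sub>\<gamma>\<close> that contains a vector \<open>h\<close> with \<open>B \<gamma> h \<noteq> 0\<close> contains
  \<open>\<gamma>\<close>, because \<open>h - s\<^sub>\<gamma> h = \<langle>\<gamma>\<^sup>\<or>, h\<rangle> \<gamma>\<close>.\<close>

lemma root_in_stable_subspace:
  assumes g: "\<gamma> \<in> R" and H: "subspace H" "\<And>h. h \<in> H \<Longrightarrow> reflect \<gamma> h \<in> H"
    and h: "h \<in> H" "B \<gamma> h \<noteq> 0"
  shows "\<gamma> \<in> H"
proof -
  define c where "c = 2 * B \<gamma> h / B \<gamma> \<gamma>"
  have c0: "c \<noteq> 0" unfolding c_def using h(2) root_norm_nz[OF g] by simp
  have "h - reflect \<gamma> h \<in> H" using subspace_diff[OF H(1) h(1) H(2)[OF h(1)]] .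
  then have "c *\<^sub>R \<gamma> \<in> H" unfolding reflect_def c_def by simp
  then have "(1 / c) *\<^sub>R (c *\<^sub>R \<gamma>) \<in> H" using H(1) by (rule subspace_mul[rotated])
  then show "\<gamma> \<in> H" using c0 by simp
qed

text \<open>With \<open>F\<close> the residues of the roots modulo a null line, \<open>B \<gamma> (gram_map F \<gamma>) \<ge> B(\<gamma>,\<gamma>)\<^sup>2 > 0\<close>.\<close>

lemma B_gram_map_root:
  assumes n: "n \<in> rad B UNIV" and fin: "finite (line_proj n ` R)" and g: "\<gamma> \<in> R"
  shows "B \<gamma> (gram_map (line_proj n ` R) \<gamma>) > 0"
proof -
  have "0 < (B \<gamma> \<gamma>)^2" using root_norm_pos[OF g] by simp
  also have "\<dots> = (B (line_proj n \<gamma>) \<gamma>)^2" by (simp add: B_line_proj[OF n])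
  also have "\<dots> \<le> B \<gamma> (gram_map (line_proj n ` R) \<gamma>)"
    unfolding B_gram_map using fin g by (intro member_le_sum) auto
  finally show ?thesis .
qed

lemma rad_line_if_roots_finite_mod_line:
  assumes n: "n \<in> rad B UNIV" and spanR: "span R = UNIV" and fin: "finite (line_proj n ` R)"
  shows "rad B UNIV \<subseteq> span {n}"
proof -
  define \<Phi> where "\<Phi> = gram_map (line_proj n ` R)"
  define H where "H = {x + y | x y. x \<in> range \<Phi> \<and> y \<in> span {n}}"
  have subH: "subspace H"
    unfolding H_def \<Phi>_def by (intro subspace_sums linear_subspace_image linear_gram_map) auto
  have stab: "reflect \<sigma> h \<in> H" if s: "\<sigma> \<in> R" and h: "h \<in> H" for \<sigma> h
  proof -
    obtain w y where hw: "h = \<Phi> w + y" "y \<in> span {n}" using h unfolding H_def by blast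
    have "y \<in> rad B UNIV" using hw(2) span_rad[of "{n}"] n by blast
    then have "reflect \<sigma> h = reflect \<sigma> (\<Phi> w) + y"
      unfolding hw(1) using linear_add[OF linear_reflect] reflect_rad by simp
    then have "reflect \<sigma> h = \<Phi> (reflect \<sigma> w) + ((reflect \<sigma> (\<Phi> w) - \<Phi> (reflect \<sigma> w)) + y)"
      by (simp add: algebra_simps)
    moreover have "(reflect \<sigma> (\<Phi> w) - \<Phi> (reflect \<sigma> w)) + y \<in> span {n}"
      using reflect_gram_map[OF s n] hw(2) unfolding \<Phi>_def by (rule span_add)
    ultimately show ?thesis unfolding H_def by blast
  qed
  have RH: "\<gamma> \<in> H" if g: "\<gamma> \<in> R" for \<gamma>
  proof (rule root_in_stable_subspace[OF g subH stab[OF g]])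
    show "\<Phi> \<gamma> \<in> H"
      unfolding H_def by (intro CollectI exI[of _ "\<Phi> \<gamma>"] exI[of _ 0]) (simp add: span_zero)
    show "B \<gamma> (\<Phi> \<gamma>) \<noteq> 0" using B_gram_map_root[OF n fin g] unfolding \<Phi>_def by simp
  qed
  have UH: "UNIV \<subseteq> H" using span_minimal[OF _ subH] RH spanR by blast
  show ?thesis
  proof
    fix r assume r: "r \<in> rad B UNIV"
    obtain w y where ry: "r = \<Phi> w + y" "y \<in> span {n}" using UH unfolding H_def by blast
    have "\<Phi> w = r - y" using ry by simp
    also have "\<dots> \<in> rad B UNIV" using r ry(2) span_rad[of "{n}"] n subspace_rad by (auto intro: subspace_diff)
    finally have "\<Phi> w = 0" unfolding \<Phi>_def using gram_map_rad fin by blast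
    then show "r \<in> span {n}" using ry by simp
  qed
qed

end

section \<open>Elliptic root systems with a fundamental set\<close>

locale elliptic_fs =
  fixes B :: "'v::euclidean_space \<Rightarrow> 'v \<Rightarrow> real"
    and R P :: "'v set" and a :: 'v
    and p :: "'v \<Rightarrow> 'w::euclidean_space"
  assumes elliptic: "ears B UNIV R 2"
    and reduced_R: "reduced R"
    and quotient: "quotient_map a p"
    and fundamental: "fundamental_set B R P a p"

sublocale elliptic_fs \<subseteq> reflection_system B R
  using elliptic by (rule ears_reflection_system)

context elliptic_fs
begin

lemma dim_rad: "dim (rad B UNIV) = 2" using elliptic unfolding ears_def by auto
lemma span_roots: "span R = UNIV" using elliptic unfolding ears_def by auto
lemma lattice_free: "free_of_rank (int_span R) DIM('v)"
  using elliptic unfolding ears_def by (auto simp: dim_UNIV)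

lemma a_rad: "a \<in> rad B UNIV" and a_lattice: "a \<in> int_span R"
  using fundamental unfolding fundamental_set_def by auto

lemma linear_p: "linear p" and ker_p: "p x = 0 \<longleftrightarrow> x \<in> span {a}"
  using quotient unfolding quotient_map_def by auto

lemma DIM_ge_2: "DIM('v) \<ge> 2"
  using dim_rad dim_subset_UNIV[of "rad B UNIV"] by (simp add: dim_UNIV)

lemma P_roots: "P \<subseteq> R" and P_finite: "finite P" and card_P: "card P = DIM('v) - 1"
  and quotient_base: "is_base (range p) (p ` R) (p ` P)"
  using fundamental DIM_ge_2 unfolding fundamental_set_def by (auto simp: dim_UNIV)

definition b_gen :: 'v where
  "b_gen = (SOME b. int_span R \<inter> rad B UNIV = {of_int i *\<^sub>R a + of_int j *\<^sub>R b | i j. True} \<and>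
          (\<forall>i j. of_int i *\<^sub>R a + of_int j *\<^sub>R b = 0 \<longrightarrow> i = (0::int) \<and> j = (0::int)))"

lemma null_lattice: "int_span R \<inter> rad B UNIV = {of_int i *\<^sub>R a + of_int j *\<^sub>R b_gen | i j. True}"
  and null_lattice_int_indep:
    "\<And>i j. of_int i *\<^sub>R a + of_int j *\<^sub>R b_gen = 0 \<Longrightarrow> i = (0::int) \<and> j = (0::int)"
proof -
  have "\<exists>b. int_span R \<inter> rad B UNIV = {of_int i *\<^sub>R a + of_int j *\<^sub>R b | i j. True} \<and>
          (\<forall>i j. of_int i *\<^sub>R a + of_int j *\<^sub>R b = 0 \<longrightarrow> i = (0::int) \<and> j = (0::int))"
    using fundamental unfolding fundamental_set_def by blast
  from someI_ex[OF this]
  show "int_span R \<inter> rad B UNIV = {of_int i *\<^sub>R a + of_int j *\<^sub>R b_gen | i j. True}"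
    "\<And>i j. of_int i *\<^sub>R a + of_int j *\<^sub>R b_gen = 0 \<Longrightarrow> i = (0::int) \<and> j = (0::int)"
    unfolding b_gen_def by blast+
qed

lemma b_gen_lattice: "b_gen \<in> int_span R" and b_gen_rad: "b_gen \<in> rad B UNIV"
proof -
  have "of_int 0 *\<^sub>R a + of_int 1 *\<^sub>R b_gen \<in> int_span R \<inter> rad B UNIV"
    unfolding null_lattice by blast
  then show "b_gen \<in> int_span R" "b_gen \<in> rad B UNIV" by auto
qed

lemma null_lattice_coords:
  "x \<in> int_span R \<Longrightarrow> x \<in> rad B UNIV \<Longrightarrow> \<exists>i j. x = of_int i *\<^sub>R a + of_int j *\<^sub>R b_gen"
  using null_lattice by blast

lemma a_nonzero: "a \<noteq> 0" using null_lattice_int_indep[of 1 0] by auto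

text \<open>Because \<open>\<int>R\<close> has an \<open>\<real>\<close>-independent \<open>\<int>\<close>-basis, \<open>a\<close> and \<open>b\<close> are independent over \<open>\<real>\<close>.\<close>

lemma null_gens_independent:
  assumes "r *\<^sub>R a + s *\<^sub>R b_gen = 0" shows "r = 0 \<and> s = 0"
proof (rule ccontr)
  assume dep: "\<not> (r = 0 \<and> s = 0)"
  obtain Bs where Bs: "finite Bs" "card Bs = DIM('v)" "int_span Bs = int_span R"
    using lattice_free unfolding free_of_rank_def by blast
  have "R \<subseteq> span Bs" using Bs(3) int_span_base[of _ R] int_span_sub_span[of Bs] by blast
  then have "UNIV \<subseteq> span Bs" using span_roots span_minimal[OF _ subspace_span] by metis
  then have indep: "independent Bs"
    using card_eq_dim[of Bs UNIV] Bs(1,2) by (auto simp: dim_UNIV)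
  have ab: "a \<in> int_span Bs" "b_gen \<in> int_span Bs" using a_lattice b_gen_lattice Bs(3) by auto
  have "\<exists>i j::int. (i \<noteq> 0 \<or> j \<noteq> 0) \<and> of_int i *\<^sub>R a + of_int j *\<^sub>R b_gen = 0"
    by (rule lattice_real_dependence_int[OF Bs(1) indep ab assms]) (use dep in auto)
  then show False using null_lattice_int_indep by blast
qed

lemma lattice_line_int: "t *\<^sub>R a \<in> int_span R \<Longrightarrow> t \<in> \<int>"
proof -
  assume h: "t *\<^sub>R a \<in> int_span R"
  obtain i j where e: "t *\<^sub>R a = of_int i *\<^sub>R a + of_int j *\<^sub>R b_gen"
    using null_lattice_coords[OF h rad_mul[OF a_rad]] by blast
  then have "(t - of_int i) *\<^sub>R a + (- of_int j) *\<^sub>R b_gen = 0" by (simp add: algebra_simps)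
  then have "t = of_int i" using null_gens_independent by fastforce
  then show ?thesis by simp
qed

lemma rad_eq_span_null_gens: "rad B UNIV = span {a, b_gen}"
proof -
  have sub: "span {a, b_gen} \<subseteq> rad B UNIV" using a_rad b_gen_rad by (simp add: span_rad)
  have "b_gen \<notin> span {a}"
  proof
    assume "b_gen \<in> span {a}"
    then obtain t where "b_gen = t *\<^sub>R a" by (auto simp: span_singleton)
    then have "t *\<^sub>R a + (-1) *\<^sub>R b_gen = 0" by simp
    then show False using null_gens_independent by fastforce
  qed
  then have "independent (insert b_gen {a})"
    using a_nonzero by (intro independent_insertI) (auto simp: independent_empty)
  then have "independent {a, b_gen}" by (simp add: insert_commute)
  moreover have "a \<noteq> b_gen" using null_lattice_int_indep[of 1 "-1"] by auto
  ultimately have "dim (span {a, b_gen}) = 2" by (simp add: dim_span dim_eq_card_independent)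
  then show ?thesis using sub dim_rad subspace_rad by (metis order_refl subspace_dim_equal subspace_span)
qed

lemma rad_not_in_line: "\<not> rad B UNIV \<subseteq> span {n}"
proof
  assume "rad B UNIV \<subseteq> span {n}"
  then have "dim (rad B UNIV) \<le> dim (span {n})" by (rule dim_subset)
  moreover have "dim (span {n}) \<le> 1" using dim_le_card[of "span {n}" "{n}"] by simp
  ultimately show False using dim_rad by simp
qed

lemma span_P_a: "span (P \<union> {a}) = UNIV"
proof -
  have bs: "finite (p ` P)" "card (p ` P) = dim (range p)" "p ` P \<subseteq> range p"
    "independent (p ` P)"
    using quotient_base unfolding is_base_def by auto
  have "range p \<subseteq> span (p ` P)" using card_eq_dim[of "p ` P" "range p"] bs by auto
  also have "\<dots> = p ` span P" using span_linear_image[OF linear_p] .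
  finally have rp: "range p \<subseteq> p ` span P" .
  show ?thesis
  proof (rule set_eqI, rule iffI)
    fix v :: 'v
    obtain w where w: "w \<in> span P" "p v = p w" using rp by blast
    then have "v - w \<in> span {a}" using linear_diff[OF linear_p] ker_p[symmetric] by simp
    then have "(v - w) + w \<in> span (P \<union> {a})"
      using w(1) by (meson span_add span_mono subsetD sup_ge1 sup_ge2)
    then show "v \<in> span (P \<union> {a})" by simp
  qed auto
qed

text \<open>A vector orthogonal to \<open>P\<close> is null, since \<open>P \<union> {a}\<close> spans and \<open>a\<close> is null.\<close>

lemma orth_P_rad:
  assumes "\<And>\<beta>. \<beta> \<in> P \<Longrightarrow> B \<beta> d = 0" shows "d \<in> rad B UNIV"
proof -
  have sub: "subspace {z. B z d = 0}" unfolding subspace_def by (auto simp: bilinear_simps)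
  have "P \<union> {a} \<subseteq> {z. B z d = 0}" using assms rad_orth(1)[OF a_rad] by auto
  then have "B d d = 0" using span_minimal[OF _ sub] span_P_a by blast
  then show ?thesis unfolding rad_def by simp
qed

lemma same_profile_shift:
  assumes "\<gamma> \<in> R" "\<gamma>' \<in> R" "cartan_profile P \<gamma> = cartan_profile P \<gamma>'"
  shows "\<gamma>' - \<gamma> \<in> shifts \<gamma>"
proof -
  have "\<gamma>' - \<gamma> \<in> rad B UNIV"
  proof (rule orth_P_rad)
    fix \<beta> assume b: "\<beta> \<in> P"
    have "2 * B \<beta> \<gamma> / B \<beta> \<beta> = 2 * B \<beta> \<gamma>' / B \<beta> \<beta>"
      using fun_cong[OF assms(3), of \<beta>] b unfolding cartan_profile_def by simp
    then have "B \<beta> \<gamma> = B \<beta> \<gamma>'" using root_norm_nz b P_roots by (auto simp: field_simps)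
    then show "B \<beta> (\<gamma>' - \<gamma>) = 0" by (simp add: B_diff_right)
  qed
  then show ?thesis unfolding shifts_def using assms(2) by simp
qed

lemma roots_finite_mod_line:
  assumes lines: "\<And>\<gamma>. \<gamma> \<in> R \<Longrightarrow> shifts \<gamma> \<subseteq> span {n}"
  shows "finite (line_proj n ` R)"
proof -
  define rep where "rep s = (SOME \<gamma>. \<gamma> \<in> R \<and> cartan_profile P \<gamma> = s)" for s
  have "line_proj n ` R \<subseteq> (\<lambda>s. line_proj n (rep s)) ` (cartan_profile P ` R)"
  proof
    fix f assume "f \<in> line_proj n ` R"
    then obtain \<gamma> where g: "\<gamma> \<in> R" "f = line_proj n \<gamma>" by blast
    have "\<exists>\<gamma>'. \<gamma>' \<in> R \<and> cartan_profile P \<gamma>' = cartan_profile P \<gamma>" using g by blast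
    then have r: "rep (cartan_profile P \<gamma>) \<in> R"
      "cartan_profile P \<gamma> = cartan_profile P (rep (cartan_profile P \<gamma>))"
      unfolding rep_def by (metis (mono_tags, lifting) someI_ex)+
    have "line_proj n (rep (cartan_profile P \<gamma>) - \<gamma>) = 0"
      using same_profile_shift[OF g(1) r] lines[OF g(1)] line_proj_eq_0 by blast
    then have "line_proj n (rep (cartan_profile P \<gamma>)) - line_proj n \<gamma> = 0"
      by (simp add: linear_diff[OF linear_line_proj])
    then have "line_proj n (rep (cartan_profile P \<gamma>)) = f" using g(2) by simp
    then show "f \<in> (\<lambda>s. line_proj n (rep s)) ` (cartan_profile P ` R)" using g(1) by blast
  qed
  then show ?thesis using finite_cartan_profiles[OF P_finite P_roots] by (meson finite_imageI finite_subset)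
qed

text \<open>If no non-zero multiple of the lattice vector \<open>v\<close> shifts \<open>\<gamma>\<close>, then the shift set of
  \<open>\<gamma>\<close> is contained in a line: for \<open>x, y\<close> in it with \<open>det(x, y) = D \<noteq> 0\<close> (coordinates
  in \<open>a, b\<close>), suitable even combinations of \<open>x, y\<close> give the shift \<open>2D v\<close>.\<close>

lemma shifts_collinear:
  assumes g: "\<gamma> \<in> R" and x: "x \<in> shifts \<gamma>" "x \<noteq> 0" and y: "y \<in> shifts \<gamma>"
    and v: "v \<in> int_span R \<inter> rad B UNIV" and no_shift: "\<not> has_shift v \<gamma>"
  shows "y \<in> span {x}"
proof -
  obtain x1 x2 where xe: "x = of_int x1 *\<^sub>R a + of_int x2 *\<^sub>R b_gen"
    using shifts_in_lattice[OF g x(1)] null_lattice_coords by blast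
  obtain y1 y2 where ye: "y = of_int y1 *\<^sub>R a + of_int y2 *\<^sub>R b_gen"
    using shifts_in_lattice[OF g y] null_lattice_coords by blast
  obtain v1 v2 where ve: "v = of_int v1 *\<^sub>R a + of_int v2 *\<^sub>R b_gen"
    using v null_lattice_coords by blast
  define D where "D = x1 * y2 - x2 * y1"
  have D0: "D = 0"
  proof (rule ccontr)
    assume "D \<noteq> 0"
    have "of_int (2 * (v1 * y2 - v2 * y1)) *\<^sub>R x + of_int (2 * (v2 * x1 - v1 * x2)) *\<^sub>R y \<in> shifts \<gamma>"
      by (rule shifts_even_combination[OF g x(1) y])
    also have "of_int (2 * (v1 * y2 - v2 * y1)) *\<^sub>R x + of_int (2 * (v2 * x1 - v1 * x2)) *\<^sub>R y
       = of_int (2 * D) *\<^sub>R v"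
      unfolding xe ye ve D_def by (simp add: algebra_simps)
    finally have "\<gamma> + of_int (2 * D) *\<^sub>R v \<in> R" unfolding shifts_def by simp
    moreover have "2 * D \<noteq> 0" using \<open>D \<noteq> 0\<close> by simp
    ultimately show False using no_shift unfolding has_shift_def by blast
  qed
  have D0r: "real_of_int x1 * of_int y2 = of_int x2 * of_int y1"
    using D0 unfolding D_def by (metis of_int_mult eq_iff_diff_eq_0)
  have e1: "of_int x1 *\<^sub>R y = of_int y1 *\<^sub>R x" and e2: "of_int x2 *\<^sub>R y = of_int y2 *\<^sub>R x"
    unfolding xe ye by (simp_all add: algebra_simps D0r)
  show ?thesis
  proof (cases "x1 = 0")
    case False
    then have "y = (1 / of_int x1) *\<^sub>R (of_int x1 *\<^sub>R y)" by simp
    then have "y = (of_int y1 / of_int x1) *\<^sub>R x" unfolding e1 by simp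
    then show ?thesis by (simp add: span_mul span_base)
  next
    case True
    then have "x2 \<noteq> 0" using x(2) xe by auto
    then have "y = (1 / of_int x2) *\<^sub>R (of_int x2 *\<^sub>R y)" by simp
    then have "y = (of_int y2 / of_int x2) *\<^sub>R x" unfolding e2 by simp
    then show ?thesis by (simp add: span_mul span_base)
  qed
qed

text \<open>Every vector \<open>v\<close> of the null lattice shifts every root.  Otherwise no root has a
  \<open>v\<close>-shift, so all shift sets lie in one common line \<open>\<real>n\<close> (propagated by connectedness),
  the roots are finite modulo \<open>\<real>n\<close>, and the radical would be that line.\<close>

lemma every_root_has_shift:
  assumes v: "v \<in> int_span R \<inter> rad B UNIV" and g0: "\<gamma>0 \<in> R"
  shows "has_shift v \<gamma>0"
proof (rule ccontr)
  assume "\<not> has_shift v \<gamma>0"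
  then have none: "\<not> has_shift v \<gamma>" if "\<gamma> \<in> R" for \<gamma>
    using has_shift_all_or_none[of v \<gamma> \<gamma>0] v that g0 by blast
  obtain n where n: "n \<in> rad B UNIV" "\<And>\<gamma>. \<gamma> \<in> R \<Longrightarrow> shifts \<gamma> \<subseteq> span {n}"
  proof (cases "\<exists>\<gamma>1\<in>R. \<exists>x1\<in>shifts \<gamma>1. x1 \<noteq> 0")
    case True
    then obtain \<gamma>1 x1 where g1: "\<gamma>1 \<in> R" "x1 \<in> shifts \<gamma>1" "x1 \<noteq> 0" by blast
    have "shifts \<gamma>1 \<subseteq> span {x1}"
      using shifts_collinear[OF g1(1,2,3) _ v none[OF g1(1)]] by blast
    then have "{\<gamma>\<in>R. shifts \<gamma> \<subseteq> span {x1}} = R"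
      using g1(1) shifts_line_propagates by (intro connected_closure) blast+
    moreover have "x1 \<in> rad B UNIV" using g1(2) unfolding shifts_def by simp
    ultimately show thesis using that[of x1] by blast
  next
    case False
    have "shifts \<gamma> \<subseteq> span {a}" if g: "\<gamma> \<in> R" for \<gamma>
    proof
      fix x assume "x \<in> shifts \<gamma>"
      then have "x = 0" using False g by blast
      then show "x \<in> span {a}" by (simp add: span_zero)
    qed
    then show thesis using that a_rad by blast
  qed
  then have "rad B UNIV \<subseteq> span {n}"
    using rad_line_if_roots_finite_mod_line[OF n(1) span_roots roots_finite_mod_line] by blast
  then show False using rad_not_in_line by blast
qed

lemma root_shift_by_a: "\<gamma> \<in> R \<Longrightarrow> \<exists>k::int. k \<noteq> 0 \<and> \<gamma> + of_int k *\<^sub>R a \<in> R"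
  using every_root_has_shift[of a] a_lattice a_rad unfolding has_shift_def by blast


lemma a_notin_P: "a \<notin> P" using P_roots roots_nonnull a_rad by blast

lemma independent_P_a: "independent (insert a P)"
proof -
  have "card (insert a P) = DIM('v)" using card_P P_finite a_notin_P DIM_ge_2 by simp
  then show ?thesis using card_eq_dim[of "insert a P" UNIV] span_P_a P_finite by (simp add: dim_UNIV)
qed

lemma coords_zero:
  assumes "(\<Sum>u\<in>P. c u *\<^sub>R u) + t *\<^sub>R a = 0" shows "(\<forall>u\<in>P. c u = 0) \<and> t = 0"
proof -
  define e where "e u = (if u = a then t else c u)" for u
  have "(\<Sum>u\<in>P. e u *\<^sub>R u) = (\<Sum>u\<in>P. c u *\<^sub>R u)"
    using a_notin_P unfolding e_def by (intro sum.cong) auto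
  then have "(\<Sum>u\<in>insert a P. e u *\<^sub>R u) = 0"
    using assms P_finite a_notin_P by (simp add: e_def add.commute)
  then have "\<forall>u\<in>insert a P. e u = 0"
    using independentD[OF independent_P_a] P_finite by blast
  then show ?thesis unfolding e_def using a_notin_P by (metis insertCI)
qed

lemma coords_unique:
  assumes "(\<Sum>u\<in>P. c u *\<^sub>R u) + t *\<^sub>R a = (\<Sum>u\<in>P. d u *\<^sub>R u) + s *\<^sub>R a"
  shows "(\<forall>u\<in>P. c u = d u) \<and> t = s"
proof -
  have "(\<Sum>u\<in>P. (c u - d u) *\<^sub>R u) + (t - s) *\<^sub>R a = 0"
    using assms by (simp add: scaleR_diff_left sum_subtractf algebra_simps)
  then show ?thesis using coords_zero by fastforce
qed

lemma coords_exist: "\<exists>c t. v = (\<Sum>u\<in>P. c u *\<^sub>R u) + t *\<^sub>R a"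
proof -
  have "v \<in> span (insert a P)" using span_P_a by simp
  then obtain e where "v = (\<Sum>u\<in>insert a P. e u *\<^sub>R u)"
    using span_finite[of "insert a P"] P_finite by auto
  then have "v = (\<Sum>u\<in>P. e u *\<^sub>R u) + e a *\<^sub>R a"
    using P_finite a_notin_P by (simp add: add.commute)
  then show ?thesis by blast
qed

lemma inj_p_P: "inj_on p P"
proof (rule ccontr)
  assume "\<not> inj_on p P"
  then obtain u u' where uu: "u \<in> P" "u' \<in> P" "u \<noteq> u'" "p u = p u'" unfolding inj_on_def by blast
  then have "p (u' - u) = 0" using linear_diff[OF linear_p] by simp
  then have "u' - u \<in> span {a}" using ker_p by simp
  then obtain t where "u' - u = t *\<^sub>R a" by (auto simp: span_singleton)
  then have t: "u' = u + t *\<^sub>R a" by (simp add: algebra_simps)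
  define Q where "Q = insert a (P - {u'})"
  have "u \<in> span Q" "a \<in> span Q" unfolding Q_def using uu by (auto intro: span_base)
  then have "u' \<in> span Q" unfolding t by (simp add: span_add span_mul)
  then have "insert a P \<subseteq> span Q" unfolding Q_def by (auto intro: span_base)
  then have "span (P \<union> {a}) \<subseteq> span Q" by (simp add: span_minimal)
  then have "UNIV \<subseteq> span Q" using span_P_a by simp
  then have "DIM('v) \<le> card Q" using dim_le_card[of UNIV Q] P_finite unfolding Q_def by (simp add: dim_UNIV)
  moreover have "card Q \<le> card P" unfolding Q_def using P_finite uu(2) a_notin_P
    by (simp add: card_insert_if) (metis One_nat_def Suc_pred card_gt_0_iff empty_iff le_refl)
  ultimately show False using card_P DIM_ge_2 by simp
qed

text \<open>Every root is \<open>\<Sum> c\<^sub>u u + t a\<close> with integers \<open>c\<^sub>u\<close> of one sign and \<open>t \<in> \<int>\<close>: the sign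
  condition comes from the base \<open>\<pi>\<^sub>a(P)\<close> of the quotient, integrality of \<open>t\<close> from the
  null lattice.\<close>

lemma root_coords:
  assumes g: "\<gamma> \<in> R"
  shows "\<exists>c t. \<gamma> = (\<Sum>u\<in>P. of_int (c u) *\<^sub>R u) + of_int t *\<^sub>R a \<and>
           ((\<forall>u\<in>P. 0 \<le> c u) \<or> (\<forall>u\<in>P. c u \<le> 0))"
proof -
  have "p \<gamma> \<in> nonneg_int_comb (p ` P) \<or> p \<gamma> \<in> nonpos_int_comb (p ` P)"
    using quotient_base g unfolding is_base_def by blast
  then obtain c0 :: "'w \<Rightarrow> int" where c0: "p \<gamma> = (\<Sum>x\<in>p ` P. of_int (c0 x) *\<^sub>R x)"
    "(\<forall>x\<in>p ` P. 0 \<le> c0 x) \<or> (\<forall>x\<in>p ` P. c0 x \<le> 0)"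
    unfolding nonneg_int_comb_def nonpos_int_comb_def by blast
  define c where "c u = c0 (p u)" for u
  have "p \<gamma> = (\<Sum>u\<in>P. of_int (c u) *\<^sub>R p u)"
    unfolding c0(1) c_def using sum.reindex[OF inj_p_P, of "\<lambda>x. of_int (c0 x) *\<^sub>R x"] by simp
  also have "\<dots> = p (\<Sum>u\<in>P. of_int (c u) *\<^sub>R u)"
    by (simp add: linear_sum[OF linear_p] linear_scale[OF linear_p])
  finally have "p (\<gamma> - (\<Sum>u\<in>P. of_int (c u) *\<^sub>R u)) = 0" using linear_diff[OF linear_p] by simp
  then obtain t where t: "\<gamma> - (\<Sum>u\<in>P. of_int (c u) *\<^sub>R u) = t *\<^sub>R a"
    using ker_p by (auto simp: span_singleton)
  have "(\<Sum>u\<in>P. of_int (c u) *\<^sub>R u) \<in> int_span R" using int_span_intro[OF P_finite P_roots] .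
  then have "t *\<^sub>R a \<in> int_span R" unfolding t[symmetric] using int_span_diff int_span_base g by blast
  then obtain k where k: "t = of_int k" using lattice_line_int Ints_cases by metis
  have "\<gamma> = (\<Sum>u\<in>P. of_int (c u) *\<^sub>R u) + of_int k *\<^sub>R a" using t k by (simp add: algebra_simps)
  moreover have "(\<forall>u\<in>P. 0 \<le> c u) \<or> (\<forall>u\<in>P. c u \<le> 0)" using c0(2) unfolding c_def by auto
  ultimately show ?thesis by blast
qed

text \<open>If the generator \<open>b\<close> has vanishing \<open>u'\<close>-coordinate for some \<open>u' \<in> P\<close>, then all its
  \<open>P\<close>-coordinates vanish: otherwise a root \<open>u' + k b\<close> (which exists for suitable
  \<open>k \<noteq> 0\<close> of either sign, by part (1) for \<open>b\<close>) would have coordinates of both signs.\<close>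

lemma b_gen_coords:
  assumes b: "b_gen = (\<Sum>u\<in>P. d u *\<^sub>R u) + s *\<^sub>R a" and u': "u' \<in> P" "d u' = 0"
    and u0: "u0 \<in> P"
  shows "d u0 = 0"
proof (rule ccontr)
  assume d0: "d u0 \<noteq> 0"
  then have "u0 \<noteq> u'" using u' by auto
  have u'R: "u' \<in> R" using u' P_roots by auto
  obtain m :: int where m: "m \<noteq> 0" "u' + of_int m *\<^sub>R b_gen \<in> R"
    using every_root_has_shift[OF _ u'R] b_gen_lattice b_gen_rad unfolding has_shift_def by blast
  define k :: int where "k = 2 * (if d u0 > 0 then - m else m) * m"
  have "0 < m * m" using m(1) by (auto simp: zero_less_mult_iff linorder_neq_iff)
  then have neg: "of_int k * d u0 < 0" using d0 unfolding k_def
    by (cases "d u0 > 0") (auto simp: mult_pos_neg mult_neg_pos algebra_simps simp del: of_int_mult)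
  have root: "u' + of_int k *\<^sub>R b_gen \<in> R"
    unfolding k_def using even_multiple_shift[OF u'R b_gen_rad m(2)] .
  define e where "e u = (if u = u' then 1 else 0) + of_int k * d u" for u
  have "e u *\<^sub>R u = (if u = u' then u else 0) + of_int k *\<^sub>R (d u *\<^sub>R u)" for u
    unfolding e_def by (simp add: scaleR_add_left)
  then have "(\<Sum>u\<in>P. e u *\<^sub>R u)
      = (\<Sum>u\<in>P. (if u = u' then u else 0)) + of_int k *\<^sub>R (\<Sum>u\<in>P. d u *\<^sub>R u)"
    by (simp add: sum.distrib scaleR_sum_right)
  also have "(\<Sum>u\<in>P. (if u = u' then u else 0)) = u'" using u'(1) P_finite by (simp add: sum.delta')
  finally have coords: "u' + of_int k *\<^sub>R b_gen = (\<Sum>u\<in>P. e u *\<^sub>R u) + (of_int k * s) *\<^sub>R a"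
    unfolding b by (simp add: algebra_simps)
  obtain c t where ct: "u' + of_int k *\<^sub>R b_gen = (\<Sum>u\<in>P. of_int (c u) *\<^sub>R u) + of_int t *\<^sub>R a"
    "(\<forall>u\<in>P. 0 \<le> c u) \<or> (\<forall>u\<in>P. c u \<le> 0)" using root_coords[OF root] by blast
  have "(\<Sum>u\<in>P. of_int (c u) *\<^sub>R u) + of_int t *\<^sub>R a = (\<Sum>u\<in>P. e u *\<^sub>R u) + (of_int k * s) *\<^sub>R a"
    by (rule trans[OF ct(1)[symmetric] coords])
  then have "\<forall>u\<in>P. real_of_int (c u) = e u" by (rule coords_unique[THEN conjunct1])
  then have "c u' > 0" "c u0 < 0" using u' u0 neg \<open>u0 \<noteq> u'\<close> unfolding e_def by auto
  then show False using ct(2) u'(1) u0 by force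
qed

lemma p_eq_rad: "p x' = p x \<Longrightarrow> x' - x \<in> rad B UNIV"
proof -
  assume "p x' = p x"
  then have "p (x' - x) = 0" using linear_diff[OF linear_p] by simp
  then have "x' - x \<in> span {a}" using ker_p by simp
  then show ?thesis using a_rad span_rad[of "{a}"] by blast
qed

text \<open>The induced form is well defined: representatives of a class differ by a null vector.\<close>

lemma qform_p: "qform B p (p x) (p y) = B x y"
proof -
  have "p (SOME x'. p x' = p x) = p x" "p (SOME y'. p y' = p y) = p y" by (rule someI, simp)+
  then show ?thesis unfolding qform_def by (intro B_mod_rad p_eq_rad)
qed

text \<open>The form on the quotient is that of \<open>V\<close>, so connectedness passes to images.\<close>

lemma connected_quotient:
  assumes "connected_set B X" shows "connected_set (qform B p) (p ` X)"
  unfolding connected_set_def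
proof
  assume "\<exists>Y. Y \<noteq> {} \<and> Y \<subset> p ` X \<and> (\<forall>x\<in>Y. \<forall>y\<in>p ` X - Y. qform B p x y = 0)"
  then obtain Y where Y: "Y \<noteq> {}" "Y \<subset> p ` X" "\<forall>x\<in>Y. \<forall>y\<in>p ` X - Y. qform B p x y = 0"
    by blast
  define X' where "X' = {\<gamma> \<in> X. p \<gamma> \<in> Y}"
  have "X' \<noteq> {} \<and> X' \<subset> X \<and> (\<forall>x\<in>X'. \<forall>y\<in>X - X'. B x y = 0)"
    using Y unfolding X'_def by (auto simp: qform_p[symmetric])
  then show False using assms unfolding connected_set_def by blast
qed

lemma refl_quotient: "refl (qform B p) (p \<alpha>) (p \<gamma>) = p (reflect \<alpha> \<gamma>)"
  unfolding refl_def copair_def qform_p reflect_def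
  by (simp add: linear_diff[OF linear_p] linear_scale[OF linear_p])

end

section \<open>The subsystem attached to a connected proper subset of \<open>P\<close>\<close>

locale elliptic_fs_sub = elliptic_fs B R P a p
  for B :: "'v::euclidean_space \<Rightarrow> 'v \<Rightarrow> real"
    and R P :: "'v set" and a :: 'v
    and p :: "'v \<Rightarrow> 'w::euclidean_space" +
  fixes S :: "'v set"
  assumes S_nonempty: "S \<noteq> {}" and S_proper: "S \<subset> P" and S_connected: "connected_set B S"
begin

abbreviation V_S :: "'v set" where "V_S \<equiv> span (S \<union> {a})"
abbreviation R_S :: "'v set" where "R_S \<equiv> R \<inter> span (S \<union> {a})"

lemma S_P: "S \<subseteq> P" using S_proper by auto
lemma S_finite: "finite S" using S_P P_finite finite_subset by blast
lemma S_V_S: "S \<subseteq> V_S" by (meson span_superset subset_trans sup_ge1)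
lemma a_V_S: "a \<in> V_S" by (simp add: span_base)
lemma S_R_S: "S \<subseteq> R_S" using S_P P_roots S_V_S by auto
lemma a_notin_S: "a \<notin> S" using a_notin_P S_P by auto

lemma independent_S_a: "independent (insert a S)"
  using independent_mono[OF independent_P_a] S_P by blast

lemma in_V_S_iff:
  assumes x: "x = (\<Sum>u\<in>P. c u *\<^sub>R u) + t *\<^sub>R a"
  shows "x \<in> V_S \<longleftrightarrow> (\<forall>u\<in>P - S. c u = 0)"
proof
  assume h: "\<forall>u\<in>P - S. c u = 0"
  have "(\<Sum>u\<in>P. c u *\<^sub>R u) = (\<Sum>u\<in>S. c u *\<^sub>R u)"
    using h S_P P_finite by (intro sum.mono_neutral_right) auto
  moreover have "(\<Sum>u\<in>S. c u *\<^sub>R u) \<in> V_S"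
    using S_V_S by (intro span_sum span_mul) (auto intro: span_base)
  ultimately show "x \<in> V_S" unfolding x using a_V_S by (simp add: span_add span_mul)
next
  assume "x \<in> V_S"
  then obtain e where e: "x = (\<Sum>y\<in>insert a S. e y *\<^sub>R y)"
    using span_finite[of "insert a S"] S_finite by auto
  define d where "d u = (if u \<in> S then e u else 0)" for u
  have "(\<Sum>u\<in>P. d u *\<^sub>R u) = (\<Sum>u\<in>S. e u *\<^sub>R u)"
    unfolding d_def using S_P P_finite by (intro sum.mono_neutral_cong_right) auto
  then have "(\<Sum>u\<in>P. c u *\<^sub>R u) + t *\<^sub>R a = (\<Sum>u\<in>P. d u *\<^sub>R u) + e a *\<^sub>R a"
    using x e S_finite a_notin_S by (simp add: add.commute)
  then have "\<forall>u\<in>P. c u = d u" using coords_unique by blast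
  then show "\<forall>u\<in>P - S. c u = 0" unfolding d_def by auto
qed

lemma root_S_coords:
  assumes g: "\<gamma> \<in> R_S"
  shows "\<exists>c t. \<gamma> = (\<Sum>u\<in>S. of_int (c u) *\<^sub>R u) + of_int t *\<^sub>R a \<and>
           ((\<forall>u\<in>S. 0 \<le> c u) \<or> (\<forall>u\<in>S. c u \<le> 0))"
proof -
  obtain c t where ct: "\<gamma> = (\<Sum>u\<in>P. of_int (c u) *\<^sub>R u) + of_int t *\<^sub>R a"
    "(\<forall>u\<in>P. 0 \<le> c u) \<or> (\<forall>u\<in>P. c u \<le> 0)" using root_coords g by blast
  have "\<forall>u\<in>P - S. real_of_int (c u) = 0" using in_V_S_iff[OF ct(1)] g by blast
  then have "(\<Sum>u\<in>P. of_int (c u) *\<^sub>R u) = (\<Sum>u\<in>S. of_int (c u) *\<^sub>R u)"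
    using S_P P_finite by (intro sum.mono_neutral_right) auto
  moreover have "(\<forall>u\<in>S. 0 \<le> c u) \<or> (\<forall>u\<in>S. c u \<le> 0)" using ct(2) S_P by blast
  ultimately show ?thesis using ct(1) by (intro exI[of _ c] exI[of _ t]) simp
qed

lemma b_gen_notin_V_S: "b_gen \<notin> V_S"
proof
  assume b: "b_gen \<in> V_S"
  obtain d s where ds: "b_gen = (\<Sum>u\<in>P. d u *\<^sub>R u) + s *\<^sub>R a" using coords_exist by blast
  have off_S: "\<forall>u\<in>P - S. d u = 0" using in_V_S_iff[OF ds] b by blast
  obtain u' where u': "u' \<in> P" "u' \<notin> S" using S_proper by blast
  have "\<forall>u\<in>P. d u = 0" using b_gen_coords[OF ds u'(1)] off_S u' by blast
  then have "s *\<^sub>R a + (-1) *\<^sub>R b_gen = 0" using ds by simp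
  then show False using null_gens_independent by fastforce
qed

lemma rad_V_S: "rad B UNIV \<inter> V_S = span {a}"
proof
  show "span {a} \<subseteq> rad B UNIV \<inter> V_S" using a_rad a_V_S by (simp add: span_rad span_minimal)
  show "rad B UNIV \<inter> V_S \<subseteq> span {a}"
  proof
    fix n assume n: "n \<in> rad B UNIV \<inter> V_S"
    have "a \<noteq> b_gen" using null_lattice_int_indep[of 1 "-1"] by auto
    obtain e where "n = (\<Sum>y\<in>{a, b_gen}. e y *\<^sub>R y)"
      using n rad_eq_span_null_gens span_finite[of "{a, b_gen}"] by auto
    then have n2: "n = e a *\<^sub>R a + e b_gen *\<^sub>R b_gen" using \<open>a \<noteq> b_gen\<close> by simp
    have "e b_gen = 0"
    proof (rule ccontr)
      assume "e b_gen \<noteq> 0"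
      then have "b_gen = (1 / e b_gen) *\<^sub>R (n - e a *\<^sub>R a)" using n2 by simp
      also have "\<dots> \<in> V_S" using n a_V_S by (simp add: span_mul span_diff)
      finally show False using b_gen_notin_V_S by blast
    qed
    then show "n \<in> span {a}" using n2 by (simp add: span_mul span_base)
  qed
qed

lemma rad_B_V_S: "rad B V_S = span {a}"
  using rad_V_S unfolding rad_def by auto

lemma dim_rad_V_S: "dim (rad B V_S) = 1"
proof -
  have "independent {a}" using a_nonzero by (simp add: independent_insertI independent_empty)
  then show ?thesis unfolding rad_B_V_S by (simp add: dim_span dim_eq_card_independent)
qed

lemma dim_V_S: "dim V_S = card S + 1"
  using independent_S_a S_finite a_notin_S by (simp add: dim_span dim_eq_card_independent)

text \<open>Part (1) applied to a root of \<open>S\<close> puts a non-zero multiple \<open>k a\<close> into \<open>\<int>R\<^sub>S\<close>.\<close>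

lemma a_multiple_in_R_S_lattice: "\<exists>k::int. k \<noteq> 0 \<and> of_int k *\<^sub>R a \<in> int_span R_S"
proof -
  obtain s where s: "s \<in> S" using S_nonempty by blast
  obtain k :: int where k: "k \<noteq> 0" "s + of_int k *\<^sub>R a \<in> R"
    using root_shift_by_a s S_R_S by blast
  have "s + of_int k *\<^sub>R a \<in> V_S" using s S_V_S a_V_S by (simp add: span_add span_mul subsetD)
  then have "s + of_int k *\<^sub>R a \<in> int_span R_S" "s \<in> int_span R_S"
    using k s S_R_S by (auto intro: int_span_base)
  then have "(s + of_int k *\<^sub>R a) - s \<in> int_span R_S" by (rule int_span_diff)
  then show ?thesis using k(1) by auto
qed

lemma span_R_S: "span R_S = V_S"
proof
  show "span R_S \<subseteq> V_S" by (simp add: span_minimal)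
  obtain k :: int where k: "k \<noteq> 0" "of_int k *\<^sub>R a \<in> int_span R_S"
    using a_multiple_in_R_S_lattice by blast
  then have "(1 / of_int k) *\<^sub>R (of_int k *\<^sub>R a) \<in> span R_S"
    using int_span_sub_span by (blast intro: span_mul)
  then have "a \<in> span R_S" using k(1) by simp
  then have "S \<union> {a} \<subseteq> span R_S" using S_R_S by (auto intro: span_base)
  then show "V_S \<subseteq> span R_S" by (simp add: span_minimal)
qed

lemma reflections_stable_R_S: "\<alpha> \<in> R_S \<Longrightarrow> refl B \<alpha> ` R_S = R_S"
proof -
  assume al: "\<alpha> \<in> R_S"
  have closed: "reflect \<alpha> \<gamma> \<in> R_S" if "\<gamma> \<in> R_S" for \<gamma>
    using reflect_root al that unfolding reflect_def by (auto simp: span_diff span_mul)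
  have "\<gamma> \<in> reflect \<alpha> ` R_S" if "\<gamma> \<in> R_S" for \<gamma>
  proof (rule image_eqI)
    show "\<gamma> = reflect \<alpha> (reflect \<alpha> \<gamma>)" using reflect_involution root_norm_nz al by simp
  qed (rule closed[OF that])
  then show ?thesis using closed by (auto simp: refl_eq)
qed

text \<open>Every root of \<open>R\<^sub>S\<close> pairs non-trivially with \<open>S\<close>; so a splitting of \<open>R\<^sub>S\<close> into
  orthogonal parts would split the connected set \<open>S\<close>.\<close>

lemma root_S_nonorth:
  assumes g: "\<gamma> \<in> R_S" shows "\<exists>u\<in>S. B u \<gamma> \<noteq> 0"
proof (rule ccontr)
  assume "\<not> (\<exists>u\<in>S. B u \<gamma> \<noteq> 0)"
  then have z: "\<forall>u\<in>S. B u \<gamma> = 0" by blast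
  obtain c t where ct: "\<gamma> = (\<Sum>u\<in>S. of_int (c u) *\<^sub>R u) + of_int t *\<^sub>R a"
    using root_S_coords[OF g] by blast
  have "B \<gamma> \<gamma> = (\<Sum>u\<in>S. of_int (c u) * B u \<gamma>) + of_int t * B a \<gamma>"
    by (subst (1) ct) (simp add: B_add_left B_sum_left B_scale_left)
  also have "\<dots> = 0" using z rad_orth(1)[OF a_rad] by simp
  finally show False using root_norm_nz g by simp
qed

lemma connected_R_S: "connected_set B R_S"
  unfolding connected_set_def
proof
  assume "\<exists>S'. S' \<noteq> {} \<and> S' \<subset> R_S \<and> (\<forall>x\<in>S'. \<forall>y\<in>R_S - S'. B x y = 0)"
  then obtain S' where S': "S' \<noteq> {}" "S' \<subset> R_S" and orth: "\<And>x y. x \<in> S' \<Longrightarrow> y \<in> R_S - S' \<Longrightarrow> B x y = 0"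
    by blast
  consider "S \<subseteq> S'" | "S \<inter> S' = {}" | "S \<inter> S' \<noteq> {}" "\<not> S \<subseteq> S'" by blast
  then show False
  proof cases
    case 1
    obtain y where y: "y \<in> R_S" "y \<notin> S'" using S'(2) by blast
    obtain u where "u \<in> S" "B u y \<noteq> 0" using root_S_nonorth[OF y(1)] by blast
    then show False using orth[of u y] 1 y by auto
  next
    case 2
    obtain x where x: "x \<in> S'" using S'(1) by blast
    obtain u where u: "u \<in> S" "B u x \<noteq> 0" using root_S_nonorth x S'(2) by blast
    have "u \<in> R_S - S'" using u 2 S_R_S by auto
    then show False using orth[OF x] u(2) B_sym[of u x] by simp
  next
    case 3
    then have "S \<inter> S' \<noteq> {} \<and> S \<inter> S' \<subset> S \<and> (\<forall>x\<in>S \<inter> S'. \<forall>y\<in>S - S \<inter> S'. B x y = 0)"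
      using orth S_R_S by auto
    then have "\<exists>S''. S'' \<noteq> {} \<and> S'' \<subset> S \<and> (\<forall>x\<in>S''. \<forall>y\<in>S - S''. B x y = 0)" by (rule exI)
    with S_connected show False unfolding connected_set_def by (rule notE)
  qed
qed

lemma R_S_lattice_sub: "int_span R_S \<subseteq> int_span (insert a S)"
proof (rule int_span_subset, rule subsetI)
  fix \<gamma> assume "\<gamma> \<in> R_S"
  then obtain c t where ct: "\<gamma> = (\<Sum>u\<in>S. of_int (c u) *\<^sub>R u) + of_int t *\<^sub>R a"
    using root_S_coords by blast
  have "(\<Sum>u\<in>S. of_int (c u) *\<^sub>R u) \<in> int_span S" using int_span_intro[OF S_finite subset_refl] .
  then show "\<gamma> \<in> int_span (insert a S)" unfolding ct by (rule int_span_insert_mem)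
qed

text \<open>The integers \<open>t\<close> with \<open>t a \<in> \<int>R\<^sub>S\<close> form a non-zero subgroup of \<open>\<int>\<close>, generated by
  its least positive element \<open>k\<^sub>S\<close>.\<close>

definition a_coeffs :: "int set" where "a_coeffs = {t. of_int t *\<^sub>R a \<in> int_span R_S}"

definition k_S :: nat where "k_S = (LEAST n::nat. 0 < n \<and> int n \<in> a_coeffs)"

lemma a_coeffs_diff: "s \<in> a_coeffs \<Longrightarrow> t \<in> a_coeffs \<Longrightarrow> s - t \<in> a_coeffs"
  unfolding a_coeffs_def using int_span_diff by (fastforce simp: scaleR_diff_left)

lemma a_coeffs_mult: "t \<in> a_coeffs \<Longrightarrow> j * t \<in> a_coeffs"
  unfolding a_coeffs_def using int_span_scale[of "of_int t *\<^sub>R a" _ j] by simp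

lemma k_S: "0 < k_S" "int k_S \<in> a_coeffs"
proof -
  obtain k :: int where k: "k \<noteq> 0" "k \<in> a_coeffs"
    using a_multiple_in_R_S_lattice unfolding a_coeffs_def by blast
  have "sgn k * k \<in> a_coeffs" using a_coeffs_mult[OF k(2)] .
  then have "\<bar>k\<bar> \<in> a_coeffs" by (simp add: abs_sgn mult.commute)
  then have "0 < nat \<bar>k\<bar> \<and> int (nat \<bar>k\<bar>) \<in> a_coeffs" using k(1) by simp
  then have "0 < k_S \<and> int k_S \<in> a_coeffs" unfolding k_S_def by (rule LeastI)
  then show "0 < k_S" "int k_S \<in> a_coeffs" by auto
qed

lemma k_S_dvd: "t \<in> a_coeffs \<Longrightarrow> int k_S dvd t"
proof -
  assume t: "t \<in> a_coeffs"
  have "t - (t div int k_S) * int k_S \<in> a_coeffs" using a_coeffs_diff[OF t a_coeffs_mult[OF k_S(2)]] .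
  then have m: "int (nat (t mod int k_S)) \<in> a_coeffs"
    using k_S(1) by (simp add: minus_div_mult_eq_mod)
  have "t mod int k_S = 0"
  proof (rule ccontr)
    assume "t mod int k_S \<noteq> 0"
    then have "0 < nat (t mod int k_S)" using k_S(1) by (simp add: order_le_neq_trans)
    then have "k_S \<le> nat (t mod int k_S)" using m unfolding k_S_def by (simp add: Least_le)
    moreover have "0 \<le> t mod int k_S" "t mod int k_S < int k_S" using k_S(1) by simp_all
    ultimately show False by (simp add: le_nat_iff)
  qed
  then show ?thesis by (simp add: dvd_eq_mod_eq_0)
qed

lemma k_S_a_lattice: "of_nat k_S *\<^sub>R a \<in> int_span R_S"
  using k_S(2) unfolding a_coeffs_def by simp

lemma R_S_lattice:
  "int_span R_S = {s + of_int j *\<^sub>R (of_nat k_S *\<^sub>R a) | s j. s \<in> int_span S}"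
proof
  show "int_span R_S \<subseteq> {s + of_int j *\<^sub>R (of_nat k_S *\<^sub>R a) | s j. s \<in> int_span S}"
  proof
    fix z assume z: "z \<in> int_span R_S"
    obtain s t where st: "s \<in> int_span S" "z = s + of_int t *\<^sub>R a"
      using int_span_insert_decomp R_S_lattice_sub z by blast
    have "s \<in> int_span R_S" using st(1) int_span_mono[OF S_R_S] by blast
    then have "t \<in> a_coeffs" unfolding a_coeffs_def using int_span_diff[OF z] st(2) by fastforce
    then obtain j where "t = int k_S * j" using k_S_dvd by (auto elim: dvdE)
    then have "z = s + of_int j *\<^sub>R (of_nat k_S *\<^sub>R a)" using st(2) by (simp add: mult.commute)
    then show "z \<in> {s + of_int j *\<^sub>R (of_nat k_S *\<^sub>R a) | s j. s \<in> int_span S}" using st(1) by blast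
  qed
  show "{s + of_int j *\<^sub>R (of_nat k_S *\<^sub>R a) | s j. s \<in> int_span S} \<subseteq> int_span R_S"
  proof
    fix z assume "z \<in> {s + of_int j *\<^sub>R (of_nat k_S *\<^sub>R a) | s j. s \<in> int_span S}"
    then obtain s j where "s \<in> int_span S" "z = s + of_int j *\<^sub>R (of_nat k_S *\<^sub>R a)" by blast
    then show "z \<in> int_span R_S"
      using int_span_mono[OF S_R_S] int_span_add int_span_scale[OF k_S_a_lattice] by blast
  qed
qed

lemma R_S_lattice_direct: "int_span S \<inter> int_span {of_nat k_S *\<^sub>R a} = {0}"
proof
  show "{0} \<subseteq> int_span S \<inter> int_span {of_nat k_S *\<^sub>R a}" by (simp add: int_span_0)
  show "int_span S \<inter> int_span {of_nat k_S *\<^sub>R a} \<subseteq> {0}"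
  proof
    fix x assume x: "x \<in> int_span S \<inter> int_span {of_nat k_S *\<^sub>R a}"
    then have "x \<in> span S" using int_span_sub_span by blast
    then obtain e where e: "x = (\<Sum>u\<in>S. e u *\<^sub>R u)" using span_finite[OF S_finite] by auto
    obtain r where r: "x = r *\<^sub>R a"
      using x int_span_sub_span[of "{of_nat k_S *\<^sub>R a}"] by (auto simp: span_singleton)
    define d where "d u = (if u \<in> S then e u else 0)" for u
    have "(\<Sum>u\<in>P. d u *\<^sub>R u) = (\<Sum>u\<in>S. e u *\<^sub>R u)"
      unfolding d_def using S_P P_finite by (intro sum.mono_neutral_cong_right) auto
    then have "(\<Sum>u\<in>P. d u *\<^sub>R u) + (- r) *\<^sub>R a = 0" using e r by simp
    then show "x \<in> {0}" using coords_zero[of d "- r"] r by simp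
  qed
qed

lemma R_S_lattice_free: "free_of_rank (int_span R_S) (dim V_S)"
  unfolding free_of_rank_def
proof (intro exI conjI)
  let ?Bs = "insert (of_nat k_S *\<^sub>R a) S"
  have "of_nat k_S *\<^sub>R a \<notin> S"
    using S_R_S rad_mul[OF a_rad, of "of_nat k_S"] roots_nonnull by blast
  then show "finite ?Bs" "card ?Bs = dim V_S" using dim_V_S S_finite by simp_all
  show Bs: "?Bs \<subseteq> int_span R_S" using k_S_a_lattice S_R_S int_span_base by blast
  show "int_span ?Bs = int_span R_S"
  proof
    show "int_span ?Bs \<subseteq> int_span R_S" using Bs by (rule int_span_subset)
    show "int_span R_S \<subseteq> int_span ?Bs" unfolding R_S_lattice using int_span_insert_mem by blast
  qed
  have "a \<notin> span S" using independent_S_a a_notin_S by (simp add: independent_insert)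
  then have "of_nat k_S *\<^sub>R a \<notin> span S"
    using k_S(1) span_mul[of "of_nat k_S *\<^sub>R a" S "1 / of_nat k_S"] by auto
  then show "int_independent ?Bs"
    using independent_mono[OF independent_S_a] by (intro independent_imp_int_independent independent_insertI) auto
qed

theorem affine_R_S: "ears B V_S R_S 1"
  unfolding ears_def
proof (intro conjI)
  show "psd_form_on V_S B" using psdB unfolding psd_form_on_def by (auto simp: subspace_span)
  show "R_S \<subseteq> V_S - rad B V_S" using roots_nonnull unfolding rad_def by auto
  show "\<forall>\<alpha>\<in>R_S. \<forall>\<beta>\<in>R_S. copair B \<alpha> \<beta> \<in> \<int>" using cartan_int by (auto simp: copair_def)
  show "\<forall>\<alpha>\<in>R_S. refl B \<alpha> ` R_S = R_S" using reflections_stable_R_S by blast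
qed (fact dim_rad_V_S span_R_S R_S_lattice_free connected_R_S)+

lemma reduced_R_S: "reduced R_S" using reduced_R unfolding reduced_def by auto

abbreviation W_S :: "'w set" where "W_S \<equiv> p ` span (S \<union> {a})"

lemma p_a: "p a = 0" using ker_p by (simp add: span_base)

lemma W_S_span: "W_S = span (p ` S)"
proof -
  have "W_S = span (p ` (S \<union> {a}))" by (rule span_linear_image[OF linear_p, symmetric])
  also have "p ` (S \<union> {a}) = insert 0 (p ` S)" using p_a by auto
  finally show ?thesis by simp
qed

lemma inj_p_S: "inj_on p S" using inj_on_subset[OF inj_p_P S_P] .

lemma independent_p_S: "independent (p ` S)"
  using quotient_base independent_mono S_P unfolding is_base_def by (meson image_mono)

lemma card_p_S: "card (p ` S) = dim W_S"
  unfolding W_S_span using independent_p_S by (simp add: dim_span dim_eq_card_independent)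

lemma p_root_S_coords:
  assumes "\<gamma> \<in> R_S"
  shows "\<exists>c. p \<gamma> = (\<Sum>x\<in>p ` S. of_int (c x) *\<^sub>R x) \<and> ((\<forall>x\<in>p ` S. 0 \<le> c x) \<or> (\<forall>x\<in>p ` S. c x \<le> 0))"
proof -
  obtain c t where ct: "\<gamma> = (\<Sum>u\<in>S. of_int (c u) *\<^sub>R u) + of_int t *\<^sub>R a"
    "(\<forall>u\<in>S. 0 \<le> c u) \<or> (\<forall>u\<in>S. c u \<le> 0)" using root_S_coords[OF assms] by blast
  define c' where "c' x = c (the_inv_into S p x)" for x
  have "p \<gamma> = (\<Sum>u\<in>S. of_int (c' (p u)) *\<^sub>R p u)"
    unfolding ct c'_def using the_inv_into_f_f[OF inj_p_S]
    by (simp add: linear_add[OF linear_p] linear_sum[OF linear_p] linear_scale[OF linear_p] p_a)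
  also have "\<dots> = (\<Sum>x\<in>p ` S. of_int (c' x) *\<^sub>R x)"
    using sum.reindex[OF inj_p_S, of "\<lambda>x. of_int (c' x) *\<^sub>R x"] by simp
  finally have "p \<gamma> = (\<Sum>x\<in>p ` S. of_int (c' x) *\<^sub>R x)" .
  moreover have "(\<forall>x\<in>p ` S. 0 \<le> c' x) \<or> (\<forall>x\<in>p ` S. c' x \<le> 0)"
    using ct(2) the_inv_into_f_f[OF inj_p_S] unfolding c'_def by auto
  ultimately show ?thesis by blast
qed

lemma p_R_S_lattice: "int_span (p ` R_S) = int_span (p ` S)"
proof
  show "int_span (p ` S) \<subseteq> int_span (p ` R_S)" by (intro int_span_mono image_mono S_R_S)
  show "int_span (p ` R_S) \<subseteq> int_span (p ` S)"
  proof (rule int_span_subset, rule subsetI)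
    fix w assume "w \<in> p ` R_S"
    then obtain c where "w = (\<Sum>x\<in>p ` S. of_int (c x) *\<^sub>R x)" using p_root_S_coords by blast
    then show "w \<in> int_span (p ` S)" using S_finite by (simp add: int_span_intro)
  qed
qed

lemma p_R_S_lattice_free: "free_of_rank (int_span (p ` R_S)) (dim W_S)"
  unfolding free_of_rank_def
proof (intro exI[of _ "p ` S"] conjI)
  show "finite (p ` S)" using S_finite by (rule finite_imageI)
  have "p ` S \<subseteq> p ` R_S" using S_R_S by (rule image_mono)
  then show "p ` S \<subseteq> int_span (p ` R_S)" using int_span_base by blast
  show "int_independent (p ` S)" using independent_p_S by (rule independent_imp_int_independent)
  show "int_span (p ` S) = int_span (p ` R_S)" by (rule p_R_S_lattice[symmetric])
  show "card (p ` S) = dim W_S" by (rule card_p_S)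
qed

lemma psd_W_S: "psd_form_on W_S (qform B p)"
  unfolding psd_form_on_def
proof (intro conjI ballI allI)
  show "subspace W_S" unfolding W_S_span by (rule subspace_span)
  fix x y z assume "x \<in> W_S" "y \<in> W_S"
  then obtain x' y' where xy: "x = p x'" "y = p y'" by blast
  show "qform B p x y = qform B p y x" unfolding xy qform_p using B_sym .
  show "0 \<le> qform B p x x" unfolding xy qform_p by (rule B_nonneg)
  fix c :: real
  show "qform B p (c *\<^sub>R x) y = c * qform B p x y"
    unfolding xy linear_scale[OF linear_p, symmetric] qform_p by (rule B_scale_left)
  assume "z \<in> W_S"
  then obtain z' where z: "z = p z'" by blast
  show "qform B p (x + y) z = qform B p x z + qform B p y z"
    unfolding xy z linear_add[OF linear_p, symmetric] qform_p by (rule B_add_left)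
qed

text \<open>The induced form on \<open>\<pi>\<^sub>a(V\<^sub>S)\<close> is non-degenerate, because \<open>V\<^sup>0 \<inter> V\<^sub>S = \<real>a\<close>.\<close>

lemma rad_W_S: "rad (qform B p) W_S = {0}"
proof
  show "rad (qform B p) W_S \<subseteq> {0}"
  proof
    fix u assume "u \<in> rad (qform B p) W_S"
    then obtain x where x: "x \<in> V_S" "u = p x" "B x x = 0" unfolding rad_def by (auto simp: qform_p)
    then have "x \<in> span {a}" using rad_V_S unfolding rad_def by blast
    then show "u \<in> {0}" using x(2) ker_p by simp
  qed
  show "{0} \<subseteq> rad (qform B p) W_S"
    unfolding rad_def using linear_0[OF linear_p] qform_p[of 0 0]
    by (auto intro: span_zero image_eqI[of 0 _ 0])
qed

theorem finite_p_R_S: "ears (qform B p) W_S (p ` R_S) 0"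
  unfolding ears_def
proof (intro conjI ballI)
  show "psd_form_on W_S (qform B p)" by (rule psd_W_S)
  show "dim (rad (qform B p) W_S) = 0" unfolding rad_W_S by simp
  show "p ` R_S \<subseteq> W_S - rad (qform B p) W_S"
  proof
    fix w assume "w \<in> p ` R_S"
    then obtain \<gamma> where g: "\<gamma> \<in> R_S" "w = p \<gamma>" by blast
    have "qform B p w w \<noteq> 0" unfolding g(2) qform_p using root_norm_nz g(1) by simp
    then show "w \<in> W_S - rad (qform B p) W_S" using g unfolding rad_def by auto
  qed
  show "span (p ` R_S) = W_S" using span_linear_image[OF linear_p, of R_S] span_R_S by simp
  show "free_of_rank (int_span (p ` R_S)) (dim W_S)" by (rule p_R_S_lattice_free)
  fix x y assume "x \<in> p ` R_S" "y \<in> p ` R_S"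
  then show "copair (qform B p) x y \<in> \<int>" using cartan_int by (auto simp: copair_def qform_p)
next
  fix x assume "x \<in> p ` R_S"
  then obtain \<alpha> where al: "\<alpha> \<in> R_S" "x = p \<alpha>" by blast
  have "refl (qform B p) x ` p ` R_S = p ` (reflect \<alpha> ` R_S)"
    unfolding al(2) image_image refl_quotient ..
  also have "reflect \<alpha> ` R_S = R_S" using reflections_stable_R_S[OF al(1)] by (simp add: refl_eq)
  finally show "refl (qform B p) x ` p ` R_S = p ` R_S" .
next
  show "connected_set (qform B p) (p ` R_S)" using connected_R_S by (rule connected_quotient)
qed

theorem base_p_R_S: "is_base W_S (p ` R_S) (p ` S)"
  unfolding is_base_def
proof (intro conjI)
  show "p ` S \<subseteq> p ` R_S" using S_R_S by auto
  have "w \<in> nonneg_int_comb (p ` S) \<or> w \<in> nonpos_int_comb (p ` S)" if w: "w \<in> p ` R_S" for w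
  proof -
    obtain \<gamma> where g: "\<gamma> \<in> R_S" "w = p \<gamma>" using w by blast
    obtain c where c: "w = (\<Sum>x\<in>p ` S. of_int (c x) *\<^sub>R x)"
      "(\<forall>x\<in>p ` S. 0 \<le> c x) \<or> (\<forall>x\<in>p ` S. c x \<le> 0)"
      using p_root_S_coords[OF g(1)] g(2) by blast
    from c(2) show ?thesis
      unfolding nonneg_int_comb_def nonpos_int_comb_def using c(1) by blast
  qed
  then show "p ` R_S = p ` R_S \<inter> nonneg_int_comb (p ` S) \<union> p ` R_S \<inter> nonpos_int_comb (p ` S)"
    by blast
qed (use S_finite card_p_S independent_p_S in auto)

theorem subsystem_properties:
  "ears B V_S R_S 1 \<and> reduced R_S \<and> ears (qform B p) W_S (p ` R_S) 0 \<and> is_base W_S (p ` R_S) (p ` S)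
    \<and> (\<exists>k::nat. 0 < k \<and> int_span R_S = {s + of_int j *\<^sub>R (of_nat k *\<^sub>R a) | s j. s \<in> int_span S}
        \<and> int_span S \<inter> int_span {of_nat k *\<^sub>R a} = {0})"
proof (intro conjI exI[of _ k_S])
  show "ears B V_S R_S 1" by (rule affine_R_S)
  show "reduced R_S" by (rule reduced_R_S)
  show "ears (qform B p) W_S (p ` R_S) 0" by (rule finite_p_R_S)
  show "is_base W_S (p ` R_S) (p ` S)" by (rule base_p_R_S)
qed (fact k_S(1) R_S_lattice R_S_lattice_direct)+

end

theorem lemma4p1:
  fixes B :: "'v::euclidean_space \<Rightarrow> 'v \<Rightarrow> real"
    and R P :: "'v set" and a :: 'v
    and p :: "'v \<Rightarrow> 'w::euclidean_space"
  assumes "ears B UNIV R 2"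
    and "reduced R"
    and "quotient_map a p"
    and "fundamental_set B R P a p"
  shows "(\<forall>\<alpha>\<in>R. \<exists>k::int. k \<noteq> 0 \<and> \<alpha> + of_int k *\<^sub>R a \<in> R)
    \<and> (\<forall>S. S \<noteq> {} \<and> S \<subset> P \<and> connected_set B S \<longrightarrow>
        ears B (span (S \<union> {a})) (R \<inter> span (S \<union> {a})) 1
        \<and> reduced (R \<inter> span (S \<union> {a}))
        \<and> ears (qform B p) (p ` span (S \<union> {a})) (p ` (R \<inter> span (S \<union> {a}))) 0
        \<and> is_base (p ` span (S \<union> {a})) (p ` (R \<inter> span (S \<union> {a}))) (p ` S)
        \<and> (\<exists>k::nat. 0 < k \<and>
             int_span (R \<inter> span (S \<union> {a})) =
               {s + of_int j *\<^sub>R (of_nat k *\<^sub>R a) | s j. s \<in> int_span S}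
             \<and> int_span S \<inter> int_span {of_nat k *\<^sub>R a} = {0}))"
proof -
  interpret elliptic_fs B R P a p using assms by unfold_locales
  show ?thesis
  proof (rule conjI[OF ballI allI[OF impI]], goal_cases)
    case (1 \<alpha>)
    then show ?case by (rule root_shift_by_a)
  next
    case (2 S)
    then interpret elliptic_fs_sub B R P a p S by unfold_locales auto
    show ?case by (rule subsystem_properties)
  qed
qed

end
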